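(* Let $G$ be the subgroup of $VB_n$ generated by the elements $\lambda_{s,t}\lambda_{t,s}^{-1}$ ($1\le s<t\le n$); $\lambda_{t,s}^2$ ($1\le s<t\le n$); $\lambda_{t,s}\lambda_{r,q}\lambda_{t,s}^{-1}\lambda_{r,q}^{-1}$ ($1\le s<t\le n$, $1\le q<r\le n$, $(t-r)(t-q)(s-r)(s-q)>0$); $\lambda_{t,s}\lambda_{s,r}\lambda_{t,s}^{-1}\lambda_{t,r}^{-1}$ ($n\ge t>s>r\ge1$); $\lambda_{t,s}\lambda_{s,r}\lambda_{t,r}^{-1}\lambda_{s,r}^{-1}$ ($n\ge t>s>r\ge1$). Then the normal closure of $G$ in $VP_n$ coincides with $VP_n\cap H_n$.
   Context: The virtual braid group $VB_n$ has generators $\sigma_1,\dots,\sigma_{n-1},\rho_1,\dots,\rho_{n-1}$ and relations $\sigma_i\sigma_j=\sigma_j\sigma_i$, $\rho_i\rho_j=\rho_j\rho_i$, $\sigma_i\rho_j=\rho_j\sigma_i$ for $|i-j|\ge2$; $\sigma_i\sigma_{i+1}\sigma_i=\sigma_{i+1}\sigma_i\sigma_{i+1}$; $\rho_i\rho_{i+1}\rho_i=\rho_{i+1}\rho_i\rho_{i+1}$; $\rho_i^2=1$; $\rho_i\rho_{i+1}\sigma_i=\sigma_{i+1}\rho_i\rho_{i+1}$. Let $\iota_1:VB_n\to S_n$ send $\sigma_i,\rho_i\mapsto(i,i+1)$ and $\iota_2:VB_n\to S_n$ send $\sigma_i\mapsto1$, $\rho_i\mapsto(i,i+1)$; $VP_n=\ker\iota_1$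 (virtual pure braid group) and $H_n=\ker\iota_2$ (Rabenda group). Define $\lambda_{i,i+1}=\rho_i\sigma_i^{-1}$, $\lambda_{i+1,i}=\sigma_i^{-1}\rho_i$, and for $1\le i<j-1\le n-1$: $\lambda_{i,j}=\rho_{j-1}\rho_{j-2}\cdots\rho_{i+1}\lambda_{i,i+1}\rho_{i+1}\cdots\rho_{j-2}\rho_{j-1}$ and $\lambda_{j,i}=\rho_{j-1}\rho_{j-2}\cdots\rho_{i+1}\lambda_{i+1,i}\rho_{i+1}\cdots\rho_{j-2}\rho_{j-1}$. These elements lie in $VP_n$. *)

theory Defs
  imports "HOL-Algebra.Group" "HOL-Algebra.Generated_Groups"
begin

datatype vgen = Sg nat | Rh nat

type_synonym vletter = "vgen \<times> bool"   (* True = generator, False = its inverse *)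
type_synonym vword = "vletter list"

fun gidx :: "vgen \<Rightarrow> nat" where
  "gidx (Sg i) = i" | "gidx (Rh i) = i"

definition vb_letters :: "nat \<Rightarrow> vletter set" where
  "vb_letters n = {x. 1 \<le> gidx (fst x) \<and> gidx (fst x) \<le> n - 1}"

definition vb_words :: "nat \<Rightarrow> vword set" where
  "vb_words n = {w. set w \<subseteq> vb_letters n}"

definition flip :: "vletter \<Rightarrow> vletter" where
  "flip x = (fst x, \<not> snd x)"

definition winv :: "vword \<Rightarrow> vword" where
  "winv w = rev (map flip w)"

abbreviation sg :: "nat \<Rightarrow> vletter" where "sg i \<equiv> (Sg i, True)"
abbreviation sgi :: "nat \<Rightarrow> vletter" where "sgi i \<equiv> (Sg i, False)"
abbreviation rh :: "nat \<Rightarrow> vletter" where "rh i \<equiv> (Rh i, True)"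

definition vb_relators :: "nat \<Rightarrow> (vword \<times> vword) set" where
  "vb_relators n =
     {([sg i, sg j], [sg j, sg i]) | i j. 1 \<le> i \<and> i \<le> n - 1 \<and> 1 \<le> j \<and> j \<le> n - 1 \<and> (i + 2 \<le> j \<or> j + 2 \<le> i)}
   \<union> {([rh i, rh j], [rh j, rh i]) | i j. 1 \<le> i \<and> i \<le> n - 1 \<and> 1 \<le> j \<and> j \<le> n - 1 \<and> (i + 2 \<le> j \<or> j + 2 \<le> i)}
   \<union> {([sg i, rh j], [rh j, sg i]) | i j. 1 \<le> i \<and> i \<le> n - 1 \<and> 1 \<le> j \<and> j \<le> n - 1 \<and> (i + 2 \<le> j \<or> j + 2 \<le> i)}
   \<union> {([sg i, sg (i+1), sg i], [sg (i+1), sg i, sg (i+1)]) | i. 1 \<le> i \<and> i + 1 \<le> n - 1}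
   \<union> {([rh i, rh (i+1), rh i], [rh (i+1), rh i, rh (i+1)]) | i. 1 \<le> i \<and> i + 1 \<le> n - 1}
   \<union> {([rh i, rh i], []) | i. 1 \<le> i \<and> i \<le> n - 1}
   \<union> {([rh i, rh (i+1), sg i], [sg (i+1), rh i, rh (i+1)]) | i. 1 \<le> i \<and> i + 1 \<le> n - 1}"

inductive_set vb_rel :: "nat \<Rightarrow> (vword \<times> vword) set" for n where
  refl: "w \<in> vb_words n \<Longrightarrow> (w, w) \<in> vb_rel n"
| sym: "(u, v) \<in> vb_rel n \<Longrightarrow> (v, u) \<in> vb_rel n"
| trans: "(u, v) \<in> vb_rel n \<Longrightarrow> (v, w) \<in> vb_rel n \<Longrightarrow> (u, w) \<in> vb_rel n"
| ctx: "(u, v) \<in> vb_rel n \<Longrightarrow> a \<in> vb_words n \<Longrightarrow> b \<in> vb_words n \<Longrightarrow> (a @ u @ b, a @ v @ b) \<in> vb_rel n"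
| cancel: "x \<in> vb_letters n \<Longrightarrow> ([x, flip x], []) \<in> vb_rel n"
| relator: "(u, v) \<in> vb_relators n \<Longrightarrow> (u, v) \<in> vb_rel n"

definition vbc :: "nat \<Rightarrow> vword \<Rightarrow> vword set" where
  "vbc n w = vb_rel n `` {w}"

definition VB :: "nat \<Rightarrow> vword set monoid" where
  "VB n = \<lparr> carrier = vb_words n // vb_rel n,
            mult = (\<lambda>A B. \<Union>a\<in>A. \<Union>b\<in>B. vbc n (a @ b)),
            one = vbc n [] \<rparr>"

definition tr :: "nat \<Rightarrow> nat \<Rightarrow> nat" where
  "tr i = (\<lambda>k. if k = i then i + 1 else if k = i + 1 then i else k)"

definition iota1 :: "vword \<Rightarrow> (nat \<Rightarrow> nat)" where
  "iota1 w = foldr (\<lambda>x f. tr (gidx (fst x)) \<circ> f) w id"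

fun iota2_letter :: "vletter \<Rightarrow> (nat \<Rightarrow> nat)" where
  "iota2_letter (Sg i, b) = id"
| "iota2_letter (Rh i, b) = tr i"

definition iota2 :: "vword \<Rightarrow> (nat \<Rightarrow> nat)" where
  "iota2 w = foldr (\<lambda>x f. iota2_letter x \<circ> f) w id"

definition VP :: "nat \<Rightarrow> vword set set" where
  "VP n = {c \<in> carrier (VB n). \<forall>w\<in>c. iota1 w = id}"

definition Hn :: "nat \<Rightarrow> vword set set" where
  "Hn n = {c \<in> carrier (VB n). \<forall>w\<in>c. iota2 w = id}"

definition rchain :: "nat \<Rightarrow> nat \<Rightarrow> vword" where
  "rchain i j = map rh (rev [Suc i..<j])"

definition lam :: "nat \<Rightarrow> nat \<Rightarrow> vword" where
  "lam a b = (if a < b then rchain a b @ [rh a, sgi a] @ rev (rchain a b)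
              else rchain b a @ [sgi b, rh b] @ rev (rchain b a))"

definition G_gens :: "nat \<Rightarrow> vword set" where
  "G_gens n =
     {lam s t @ winv (lam t s) | s t. 1 \<le> s \<and> s < t \<and> t \<le> n}
   \<union> {lam t s @ lam t s | s t. 1 \<le> s \<and> s < t \<and> t \<le> n}
   \<union> {lam t s @ lam r q @ winv (lam t s) @ winv (lam r q) | s t q r.
        1 \<le> s \<and> s < t \<and> t \<le> n \<and> 1 \<le> q \<and> q < r \<and> r \<le> n \<and>
        (int t - int r) * (int t - int q) * (int s - int r) * (int s - int q) > 0}
   \<union> {lam t s @ lam s r @ winv (lam t s) @ winv (lam t r) | t s r. n \<ge> t \<and> t > s \<and> s > r \<and> r \<ge> 1}
   \<union> {lam t s @ lam s r @ winv (lam t r) @ winv (lam s r) | t s r. n \<ge> t \<and> t > s \<and> s > r \<and> r \<ge> 1}"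

definition Gsub :: "nat \<Rightarrow> vword set set" where
  "Gsub n = generate (VB n) (vbc n ` G_gens n)"

definition normal_closure_in :: "nat \<Rightarrow> vword set set \<Rightarrow> vword set set \<Rightarrow> vword set set" where
  "normal_closure_in n K X =
     generate (VB n) {g \<otimes>\<^bsub>VB n\<^esub> x \<otimes>\<^bsub>VB n\<^esub> inv\<^bsub>VB n\<^esub> g | g x. g \<in> K \<and> x \<in> X}"

end

(*
  Conjugation by rho_k permutes the elements lambda_{a,b} as the transposition (k, k+1) permutes
  the pairs (a, b). Hence every element of VB_n is a product of lambdas and their inverses followed
  by a word in the rho_i. For an element of VP_n and H_n, iota_1 shows that the rho-word maps to the
  identity of S_n, so it is trivial in VB_n because the rho_i satisfy the Coxeter relations of S_n;
  iota_2 shows that the transpositions (a b) attached to the lambda-factors multiply to the identity.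
  Modulo the normal closure N, the generators of G make lambda_{a,b} = lambda_{b,a} an involution,
  make the classes of lambda_{i+1,i} satisfy the Coxeter relations, and identify the class of
  lambda_{a,b} with the corresponding word for (a b) in them; so the same Coxeter argument puts the
  lambda-product into N. Conversely, G lies in VP_n and in the normal subgroup H_n, hence so does N.
*)
theory Submission
  imports Defs "HOL-Algebra.Sym_Groups"
begin

section \<open>Words and the group structure of VB_n\<close>

lemma flip_flip [simp]: "flip (flip x) = x"
  by (simp add: flip_def)

lemma fst_flip [simp]: "fst (flip x) = fst x"
  by (simp add: flip_def)

lemma flip_in_vb_letters [simp]: "flip x \<in> vb_letters n \<longleftrightarrow> x \<in> vb_letters n"
  by (simp add: vb_letters_def)

lemma in_vb_letters_iff [simp]: "(g, e) \<in> vb_letters n \<longleftrightarrow> 1 \<le> gidx g \<and> gidx g < n"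
  by (auto simp: vb_letters_def)

lemma Nil_in_vb_words [simp]: "[] \<in> vb_words n"
  by (simp add: vb_words_def)

lemma Cons_in_vb_words [simp]: "x # w \<in> vb_words n \<longleftrightarrow> x \<in> vb_letters n \<and> w \<in> vb_words n"
  by (auto simp: vb_words_def)

lemma append_in_vb_words [simp]: "u @ v \<in> vb_words n \<longleftrightarrow> u \<in> vb_words n \<and> v \<in> vb_words n"
  by (auto simp: vb_words_def)

lemma rev_in_vb_words [simp]: "rev w \<in> vb_words n \<longleftrightarrow> w \<in> vb_words n"
  by (simp add: vb_words_def)

lemma winv_Nil [simp]: "winv [] = []"
  by (simp add: winv_def)

lemma winv_Cons [simp]: "winv (x # w) = winv w @ [flip x]"
  by (simp add: winv_def)

lemma winv_append [simp]: "winv (u @ v) = winv v @ winv u"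
  by (simp add: winv_def)

lemma winv_winv [simp]: "winv (winv w) = w"
  by (simp add: winv_def rev_map comp_def)

lemma winv_in_vb_words [simp]: "winv w \<in> vb_words n \<longleftrightarrow> w \<in> vb_words n"
  by (auto simp: winv_def vb_words_def)

lemma vb_relators_imp_words: "(u, v) \<in> vb_relators n \<Longrightarrow> u \<in> vb_words n \<and> v \<in> vb_words n"
  by (auto simp: vb_relators_def vb_letters_def)

lemma vb_rel_imp_words: "(u, v) \<in> vb_rel n \<Longrightarrow> u \<in> vb_words n \<and> v \<in> vb_words n"
  by (induction rule: vb_rel.induct) (auto dest: vb_relators_imp_words)

lemma equiv_vb_rel: "equiv (vb_words n) (vb_rel n)"
  unfolding equiv_def refl_on_def sym_def trans_def
proof (intro conjI allI impI)
  show "vb_rel n \<subseteq> vb_words n \<times> vb_words n"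
    using vb_rel_imp_words by auto
qed (auto intro: vb_rel.refl vb_rel.sym vb_rel.trans)

lemma vb_rel_append:
  assumes "(u, u') \<in> vb_rel n" and "(v, v') \<in> vb_rel n"
  shows "(u @ v, u' @ v') \<in> vb_rel n"
proof -
  have "([] @ u @ v, [] @ u' @ v) \<in> vb_rel n"
    using assms by (intro vb_rel.ctx) (auto dest: vb_rel_imp_words)
  moreover have "(u' @ v @ [], u' @ v' @ []) \<in> vb_rel n"
    using assms by (intro vb_rel.ctx) (auto dest: vb_rel_imp_words)
  ultimately show ?thesis
    by (simp add: vb_rel.trans[of "u @ v" "u' @ v"])
qed

lemma winv_append_cancel: "w \<in> vb_words n \<Longrightarrow> (winv w @ w, []) \<in> vb_rel n"
proof (induction w)
  case Nil
  then show ?case by (auto intro: vb_rel.refl)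
next
  case (Cons x w)
  then have "([flip x, x], []) \<in> vb_rel n"
    using vb_rel.cancel[of "flip x"] by simp
  then have "(winv w @ [flip x, x] @ w, winv w @ [] @ w) \<in> vb_rel n"
    using Cons.prems by (intro vb_rel.ctx) auto
  then have "(winv (x # w) @ x # w, winv w @ w) \<in> vb_rel n"
    by simp
  then show ?case
    using Cons by (auto intro: vb_rel.trans[of _ "winv w @ w"])
qed

lemma vbc_eq_iff: "u \<in> vb_words n \<Longrightarrow> v \<in> vb_words n \<Longrightarrow> vbc n u = vbc n v \<longleftrightarrow> (u, v) \<in> vb_rel n"
  unfolding vbc_def using eq_equiv_class_iff[OF equiv_vb_rel] by blast

lemma vbc_eqI: "(u, v) \<in> vb_rel n \<Longrightarrow> vbc n u = vbc n v"
  using vbc_eq_iff vb_rel_imp_words by blast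

lemma in_vbc_iff: "v \<in> vbc n w \<longleftrightarrow> (w, v) \<in> vb_rel n"
  by (simp add: vbc_def)

lemma in_vbc_self: "w \<in> vb_words n \<Longrightarrow> w \<in> vbc n w"
  by (simp add: in_vbc_iff vb_rel.refl)

lemma carrier_VB: "carrier (VB n) = vbc n ` vb_words n"
  by (auto simp: VB_def quotient_def vbc_def)

lemma vbc_in_carrier_VB [simp]: "w \<in> vb_words n \<Longrightarrow> vbc n w \<in> carrier (VB n)"
  by (simp add: carrier_VB)

lemma one_VB: "\<one>\<^bsub>VB n\<^esub> = vbc n []"
  by (simp add: VB_def)

lemma mult_VB:
  assumes u: "u \<in> vb_words n" and v: "v \<in> vb_words n"
  shows "vbc n u \<otimes>\<^bsub>VB n\<^esub> vbc n v = vbc n (u @ v)"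
proof -
  have class_eq: "vbc n (a @ b) = vbc n (u @ v)" if "a \<in> vbc n u" "b \<in> vbc n v" for a b
    using that by (simp add: in_vbc_iff vbc_eqI[OF vb_rel.sym] vb_rel_append)
  have "(\<Union>a\<in>vbc n u. \<Union>b\<in>vbc n v. vbc n (a @ b)) = vbc n (u @ v)"
  proof (intro equalityI subsetI)
    fix x
    assume "x \<in> (\<Union>a\<in>vbc n u. \<Union>b\<in>vbc n v. vbc n (a @ b))"
    then show "x \<in> vbc n (u @ v)" using class_eq by blast
  next
    fix x
    assume "x \<in> vbc n (u @ v)"
    then show "x \<in> (\<Union>a\<in>vbc n u. \<Union>b\<in>vbc n v. vbc n (a @ b))"
      using u v in_vbc_self by blast
  qed
  then show ?thesis
    by (simp add: VB_def)
qed

lemma carrier_VB_cases: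
  assumes "x \<in> carrier (VB n)"
  obtains w where "w \<in> vb_words n" and "x = vbc n w"
  using assms by (auto simp: carrier_VB)

lemma group_VB: "group (VB n)"
proof (rule groupI)
  fix x y
  assume "x \<in> carrier (VB n)" "y \<in> carrier (VB n)"
  then show "x \<otimes>\<^bsub>VB n\<^esub> y \<in> carrier (VB n)"
    by (elim carrier_VB_cases) (simp add: mult_VB)
next
  fix x y z
  assume "x \<in> carrier (VB n)" "y \<in> carrier (VB n)" "z \<in> carrier (VB n)"
  then show "x \<otimes>\<^bsub>VB n\<^esub> y \<otimes>\<^bsub>VB n\<^esub> z = x \<otimes>\<^bsub>VB n\<^esub> (y \<otimes>\<^bsub>VB n\<^esub> z)"
    by (elim carrier_VB_cases) (simp add: mult_VB)
next
  fix x
  assume "x \<in> carrier (VB n)"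
  then show "\<one>\<^bsub>VB n\<^esub> \<otimes>\<^bsub>VB n\<^esub> x = x"
    by (elim carrier_VB_cases) (simp add: mult_VB one_VB)
next
  fix x
  assume "x \<in> carrier (VB n)"
  then obtain w where w: "w \<in> vb_words n" "x = vbc n w"
    by (elim carrier_VB_cases)
  then have "vbc n (winv w) \<otimes>\<^bsub>VB n\<^esub> x = \<one>\<^bsub>VB n\<^esub>"
    by (simp add: mult_VB one_VB vbc_eqI winv_append_cancel)
  moreover have "vbc n (winv w) \<in> carrier (VB n)"
    using w by simp
  ultimately show "\<exists>y\<in>carrier (VB n). y \<otimes>\<^bsub>VB n\<^esub> x = \<one>\<^bsub>VB n\<^esub>"
    by blast
qed (simp add: one_VB)

lemma inv_VB: "w \<in> vb_words n \<Longrightarrow> inv\<^bsub>VB n\<^esub> (vbc n w) = vbc n (winv w)"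
  by (rule group.inv_equality[OF group_VB]) (simp_all add: mult_VB one_VB vbc_eqI winv_append_cancel)

section \<open>Coxeter relations of type A\<close>

definition tr_prod :: "nat list \<Rightarrow> nat \<Rightarrow> nat" where
  "tr_prod l = foldr (\<lambda>i f. tr i \<circ> f) l id"

definition word_prod :: "('a, 'b) monoid_scheme \<Rightarrow> ('i \<Rightarrow> 'a) \<Rightarrow> 'i list \<Rightarrow> 'a" where
  "word_prod G s l = foldr (\<lambda>i acc. s i \<otimes>\<^bsub>G\<^esub> acc) l \<one>\<^bsub>G\<^esub>"

definition coxeter_A :: "('a, 'b) monoid_scheme \<Rightarrow> (nat \<Rightarrow> 'a) \<Rightarrow> nat \<Rightarrow> bool" where
  "coxeter_A G s m \<longleftrightarrow>
     (\<forall>i\<in>{1..m}. s i \<in> carrier G \<and> s i \<otimes>\<^bsub>G\<^esub> s i = \<one>\<^bsub>G\<^esub>)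
   \<and> (\<forall>i\<in>{1..m}. \<forall>j\<in>{1..m}. i + 2 \<le> j \<longrightarrow> s i \<otimes>\<^bsub>G\<^esub> s j = s j \<otimes>\<^bsub>G\<^esub> s i)
   \<and> (\<forall>i. 1 \<le> i \<and> i + 1 \<le> m \<longrightarrow>
        s i \<otimes>\<^bsub>G\<^esub> s (i + 1) \<otimes>\<^bsub>G\<^esub> s i = s (i + 1) \<otimes>\<^bsub>G\<^esub> s i \<otimes>\<^bsub>G\<^esub> s (i + 1))"

text \<open>For \<open>1 \<le> k \<le> m + 1\<close> the words \<open>coset_word m k\<close> represent the cosets of \<open>S\<^sub>m\<close> in \<open>S\<^sub>m\<^sub>+\<^sub>1\<close>.\<close>
definition coset_word :: "nat \<Rightarrow> nat \<Rightarrow> nat list" where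
  "coset_word m k = rev [k..<Suc m]"

lemma tr_prod_Nil [simp]: "tr_prod [] = id"
  by (simp add: tr_prod_def)

lemma tr_prod_Cons [simp]: "tr_prod (i # l) = tr i \<circ> tr_prod l"
  by (simp add: tr_prod_def)

lemma tr_prod_append [simp]: "tr_prod (l @ l') = tr_prod l \<circ> tr_prod l'"
  by (induction l) auto

lemma word_prod_Nil [simp]: "word_prod G s [] = \<one>\<^bsub>G\<^esub>"
  by (simp add: word_prod_def)

lemma word_prod_Cons [simp]: "word_prod G s (i # l) = s i \<otimes>\<^bsub>G\<^esub> word_prod G s l"
  by (simp add: word_prod_def)

lemma word_prod_cong: "(\<And>i. i \<in> set l \<Longrightarrow> s i = s' i) \<Longrightarrow> word_prod G s l = word_prod G s' l"
  by (induction l) auto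

lemma tr_tr [simp]: "tr i (tr i x) = x"
  by (simp add: tr_def)

lemma tr_eq_transpose: "tr i = Transposition.transpose i (Suc i)"
  by (auto simp: tr_def Transposition.transpose_def)

lemma tr_prod_fixes: "\<forall>j\<in>set l. Suc j < x \<or> x < j \<Longrightarrow> tr_prod l x = x"
  by (induction l) (auto simp: tr_def)

lemma inj_tr: "inj (tr i)"
  by (metis injI tr_tr)

lemma inj_tr_prod: "inj (tr_prod p)"
proof (induction p)
  case (Cons i p)
  then show ?case using inj_compose[OF inj_tr Cons.IH] by (simp add: comp_def)
qed simp

lemma tr_prod_in_range: "set p \<subseteq> {1..<n} \<Longrightarrow> a \<in> {1..n} \<Longrightarrow> tr_prod p a \<in> {1..n}"
  by (induction p) (auto simp: tr_def)

primrec transp_word :: "nat \<Rightarrow> nat \<Rightarrow> nat list" where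
  "transp_word x 0 = [x]"
| "transp_word x (Suc d) = transp_word (Suc x) d @ [x] @ transp_word (Suc x) d"

lemma set_transp_word: "set (transp_word x d) \<subseteq> {x..x + d}"
  by (induction d arbitrary: x) fastforce+

lemma tr_prod_transp_word: "tr_prod (transp_word x d) = Transposition.transpose x (x + d + 1)"
proof (induction d arbitrary: x)
  case 0
  then show ?case by (simp add: tr_eq_transpose)
next
  case (Suc d)
  then show ?case
    by (auto simp: fun_eq_iff Transposition.transpose_def tr_def)
qed

lemma tr_prod_coset_word: "k \<le> m \<Longrightarrow> tr_prod (coset_word m k) k = Suc m"
proof (induction m)
  case 0
  then show ?case by (simp add: coset_word_def tr_def)
next
  case (Suc m)
  show ?case
  proof (cases "k = Suc m")
    case True
    then show ?thesis by (simp add: coset_word_def tr_def)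
  next
    case False
    then have "coset_word (Suc m) k = Suc m # coset_word m k"
      using Suc.prems by (simp add: coset_word_def)
    then show ?thesis
      using Suc False by (simp add: tr_def)
  qed
qed

lemma set_coset_word [simp]: "set (coset_word m k) = {k..m}"
  by (auto simp: coset_word_def)

lemma coset_word_empty [simp]: "coset_word m (Suc m) = []"
  by (simp add: coset_word_def)

lemma coset_word_Suc: "k \<le> m \<Longrightarrow> coset_word m k = coset_word m (Suc k) @ [k]"
  by (simp add: coset_word_def upt_conv_Cons)

lemma coset_word_split:
  assumes "k < i" and "i \<le> m"
  shows "coset_word m k = coset_word m (Suc i) @ [i, i - 1] @ rev [k..<i - 1]"
proof -
  have "[k..<Suc m] = [k..<i - 1] @ [i - 1..<Suc m]"
    using assms upt_add_eq_append[of k "i - 1" "Suc m - (i - 1)"] by simp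
  also have "[i - 1..<Suc m] = (i - 1) # i # [Suc i..<Suc m]"
    using assms by (simp add: upt_conv_Cons)
  finally show ?thesis
    by (simp add: coset_word_def)
qed

lemma coxeter_A_mono: "coxeter_A G s m \<Longrightarrow> m' \<le> m \<Longrightarrow> coxeter_A G s m'"
  unfolding coxeter_A_def by (meson atLeastAtMost_iff le_trans)

lemma coxeter_A_sym_group: "coxeter_A (sym_group (Suc m)) tr m"
proof -
  have "tr i permutes {1..Suc m}" if "i \<in> {1..m}" for i
    using that by (simp add: tr_eq_transpose permutes_swap_id)
  then show ?thesis
    by (auto simp: coxeter_A_def sym_group_def fun_eq_iff) (auto simp: tr_def)
qed

lemma word_prod_sym_group: "word_prod (sym_group N) tr l = tr_prod l"
  by (induction l) (auto simp: sym_group_def)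

lemma coxeter_A_DirProd:
  "coxeter_A G s m \<Longrightarrow> coxeter_A H t m \<Longrightarrow> coxeter_A (G \<times>\<times> H) (\<lambda>i. (s i, t i)) m"
  unfolding coxeter_A_def by auto

lemma word_prod_DirProd:
  "word_prod (G \<times>\<times> H) (\<lambda>i. (s i, t i)) l = (word_prod G s l, word_prod H t l)"
  by (induction l) auto

context group
begin

lemma word_prod_closed: "s ` set l \<subseteq> carrier G \<Longrightarrow> word_prod G s l \<in> carrier G"
  by (induction l) auto

lemma word_prod_append:
  "s ` set l \<subseteq> carrier G \<Longrightarrow> s ` set l' \<subseteq> carrier G \<Longrightarrow>
    word_prod G s (l @ l') = word_prod G s l \<otimes> word_prod G s l'"
  by (induction l) (auto simp: word_prod_closed m_assoc)

lemma word_prod_concat: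
  "(\<And>y. y \<in> set u \<Longrightarrow> s ` set (f y) \<subseteq> carrier G) \<Longrightarrow>
    word_prod G s (concat (map f u)) = word_prod G (\<lambda>y. word_prod G s (f y)) u"
proof (induction u)
  case (Cons y u)
  then have "s ` set (f y) \<subseteq> carrier G" "s ` set (concat (map f u)) \<subseteq> carrier G"
    by auto
  then show ?case
    using Cons by (simp add: word_prod_append)
qed simp

lemma coxeter_A_closed: "coxeter_A G s m \<Longrightarrow> i \<in> {1..m} \<Longrightarrow> s i \<in> carrier G"
  by (simp add: coxeter_A_def)

lemma coxeter_A_word_prod_closed:
  "coxeter_A G s m \<Longrightarrow> set l \<subseteq> {1..m} \<Longrightarrow> word_prod G s l \<in> carrier G"
  by (rule word_prod_closed) (auto simp: coxeter_A_closed)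

lemma coxeter_A_word_prod_append:
  "coxeter_A G s m \<Longrightarrow> set l \<subseteq> {1..m} \<Longrightarrow> set l' \<subseteq> {1..m} \<Longrightarrow>
    word_prod G s (l @ l') = word_prod G s l \<otimes> word_prod G s l'"
  by (rule word_prod_append) (auto simp: coxeter_A_closed)

lemma coxeter_A_involution: "coxeter_A G s m \<Longrightarrow> i \<in> {1..m} \<Longrightarrow> s i \<otimes> s i = \<one>"
  by (simp add: coxeter_A_def)

lemma coxeter_A_comm:
  "coxeter_A G s m \<Longrightarrow> i \<in> {1..m} \<Longrightarrow> j \<in> {1..m} \<Longrightarrow> i + 2 \<le> j \<or> j + 2 \<le> i \<Longrightarrow>
    s i \<otimes> s j = s j \<otimes> s i"
  unfolding coxeter_A_def by metis

lemma coxeter_A_braid: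
  "coxeter_A G s m \<Longrightarrow> 1 \<le> i \<Longrightarrow> i + 1 \<le> m \<Longrightarrow> s i \<otimes> s (i + 1) \<otimes> s i = s (i + 1) \<otimes> s i \<otimes> s (i + 1)"
  by (simp add: coxeter_A_def)

lemma word_prod_comm:
  assumes cox: "coxeter_A G s m" and l: "set l \<subseteq> {1..m}" and i: "i \<in> {1..m}"
    and far: "\<forall>j\<in>set l. i + 2 \<le> j \<or> j + 2 \<le> i"
  shows "word_prod G s l \<otimes> s i = s i \<otimes> word_prod G s l"
  using l far
proof (induction l)
  case Nil
  then show ?case using coxeter_A_closed[OF cox i] by simp
next
  case (Cons j l)
  have j: "j \<in> {1..m}" and l: "set l \<subseteq> {1..m}"
    using Cons.prems by auto
  have closed: "s j \<in> carrier G" "s i \<in> carrier G" "word_prod G s l \<in> carrier G"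
    using coxeter_A_closed[OF cox j] coxeter_A_closed[OF cox i] coxeter_A_word_prod_closed[OF cox l] .
  have "word_prod G s (j # l) \<otimes> s i = s j \<otimes> s i \<otimes> word_prod G s l"
    using Cons closed by (simp add: m_assoc)
  also have "\<dots> = s i \<otimes> s j \<otimes> word_prod G s l"
    using coxeter_A_comm[OF cox, of j i] Cons.prems i by auto
  finally show ?case
    using closed by (simp add: m_assoc)
qed

lemma coset_word_mult_braid:
  assumes cox: "coxeter_A G s m" and "1 \<le> k" "k < i" "i \<le> m"
  shows "word_prod G s (coset_word m k) \<otimes> s i = s (i - 1) \<otimes> word_prod G s (coset_word m k)"
proof -
  define A where "A = word_prod G s (coset_word m (Suc i))"
  define B where "B = word_prod G s (rev [k..<i - 1])"
  have i: "i \<in> {1..m}" "i - 1 \<in> {1..m}"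
    using assms by auto
  have closed: "A \<in> carrier G" "B \<in> carrier G" "s i \<in> carrier G" "s (i - 1) \<in> carrier G"
    unfolding A_def B_def using assms i
    by (auto intro: coxeter_A_closed[OF cox] coxeter_A_word_prod_closed[OF cox])
  have split: "word_prod G s (coset_word m k) = A \<otimes> (s i \<otimes> (s (i - 1) \<otimes> B))"
    unfolding A_def B_def using assms coset_word_split[of k i m] i
    by (simp add: coxeter_A_word_prod_append[OF cox] subset_iff)
  have B_comm: "B \<otimes> s i = s i \<otimes> B"
    unfolding B_def using assms by (intro word_prod_comm[OF cox]) auto
  have A_comm: "A \<otimes> s (i - 1) = s (i - 1) \<otimes> A"
    unfolding A_def using assms i by (intro word_prod_comm[OF cox]) auto
  have braid: "s i \<otimes> s (i - 1) \<otimes> s i = s (i - 1) \<otimes> s i \<otimes> s (i - 1)"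
    using coxeter_A_braid[OF cox, of "i - 1"] assms by simp
  have "word_prod G s (coset_word m k) \<otimes> s i = A \<otimes> (s i \<otimes> s (i - 1) \<otimes> s i) \<otimes> B"
    using split B_comm closed by (simp add: m_assoc)
  also have "\<dots> = (A \<otimes> s (i - 1)) \<otimes> (s i \<otimes> (s (i - 1) \<otimes> B))"
    using braid closed by (simp add: m_assoc)
  also have "\<dots> = s (i - 1) \<otimes> word_prod G s (coset_word m k)"
    using A_comm split closed by (simp add: m_assoc)
  finally show ?thesis .
qed

lemma coset_word_extend:
  assumes cox: "coxeter_A G s m" and i: "i \<in> {1..m}"
  shows "word_prod G s (coset_word m (Suc i)) \<otimes> s i = word_prod G s (coset_word m i)"
  using coset_word_Suc[of i m] coxeter_A_word_prod_append[OF cox, of "coset_word m (Suc i)" "[i]"]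
    coxeter_A_closed[OF cox i] i by simp

lemma coset_word_shorten:
  assumes cox: "coxeter_A G s m" and i: "i \<in> {1..m}"
  shows "word_prod G s (coset_word m i) \<otimes> s i = word_prod G s (coset_word m (Suc i))"
proof -
  have "word_prod G s (coset_word m (Suc i)) \<in> carrier G"
    by (rule coxeter_A_word_prod_closed[OF cox]) auto
  then show ?thesis
    using coset_word_extend[OF cox i, symmetric] coxeter_A_involution[OF cox i] coxeter_A_closed[OF cox i]
    by (simp add: m_assoc)
qed

lemma coset_word_mult:
  assumes cox: "coxeter_A G s m" and k: "1 \<le> k" "k \<le> Suc m" and i: "i \<in> {1..m}"
  obtains h k' where "set h \<subseteq> {1..m - 1}" "1 \<le> k'" "k' \<le> Suc m"
    "word_prod G s (coset_word m k) \<otimes> s i = word_prod G s (h @ coset_word m k')"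
proof -
  consider "Suc i < k" | "Suc i = k" | "i = k" | "k < i"
    by linarith
  then show ?thesis
  proof cases
    case 1
    then have "word_prod G s (coset_word m k) \<otimes> s i = word_prod G s ([i] @ coset_word m k)"
      using word_prod_comm[OF cox _ i, of "coset_word m k"] k by auto
    moreover have "set [i] \<subseteq> {1..m - 1}"
      using 1 i k by auto
    ultimately show ?thesis
      using that k by blast
  next
    case 2
    then show ?thesis
      using that[of "[]" i] coset_word_extend[OF cox i] i by simp
  next
    case 3
    then show ?thesis
      using that[of "[]" "Suc k"] coset_word_shorten[OF cox i] i by simp
  next
    case 4
    then have "word_prod G s (coset_word m k) \<otimes> s i = word_prod G s ([i - 1] @ coset_word m k)"
      using coset_word_mult_braid[OF cox k(1) 4] i by simp
    moreover have "set [i - 1] \<subseteq> {1..m - 1}"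
      using 4 i k by auto
    ultimately show ?thesis
      using that k by blast
  qed
qed

lemma word_prod_normal_form:
  assumes cox: "coxeter_A G s m"
  shows "set l \<subseteq> {1..m} \<Longrightarrow> \<exists>h k. set h \<subseteq> {1..m - 1} \<and> 1 \<le> k \<and> k \<le> Suc m \<and>
    word_prod G s l = word_prod G s (h @ coset_word m k)"
proof (induction l rule: rev_induct)
  case Nil
  show ?case
    by (rule exI[of _ "[]"], rule exI[of _ "Suc m"]) simp
next
  case (snoc i l)
  then obtain h k where h: "set h \<subseteq> {1..m - 1}" and k: "1 \<le> k" "k \<le> Suc m"
    and l: "word_prod G s l = word_prod G s (h @ coset_word m k)"
    by auto
  have i: "i \<in> {1..m}"
    using snoc.prems by auto
  obtain h' k' where h': "set h' \<subseteq> {1..m - 1}" and k': "1 \<le> k'" "k' \<le> Suc m"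
    and step: "word_prod G s (coset_word m k) \<otimes> s i = word_prod G s (h' @ coset_word m k')"
    using coset_word_mult[OF cox k i] by blast
  have "{1..m - 1} \<subseteq> {1..m}"
    by auto
  then have hm: "set h \<subseteq> {1..m}" "set h' \<subseteq> {1..m}"
    using h h' by blast+
  have "word_prod G s (l @ [i]) = word_prod G s h \<otimes> (word_prod G s (coset_word m k) \<otimes> s i)"
    using snoc.prems i l hm k
    by (simp add: coxeter_A_word_prod_append[OF cox] coxeter_A_closed[OF cox] coxeter_A_word_prod_closed[OF cox] m_assoc)
  also have "\<dots> = word_prod G s ((h @ h') @ coset_word m k')"
    using step hm k'
    by (simp add: coxeter_A_word_prod_append[OF cox] coxeter_A_word_prod_closed[OF cox] m_assoc)
  finally show ?case
    using h h' k' by (intro exI[of _ "h @ h'"] exI[of _ k']) simp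
qed

end

lemma (in group_hom) word_prod_hom:
  "s ` set l \<subseteq> carrier G \<Longrightarrow> h (word_prod G s l) = word_prod H (h \<circ> s) l"
  by (induction l) (auto simp: G.word_prod_closed)

text \<open>The normal form is computed in \<open>G \<times> S\<^sub>m\<^sub>+\<^sub>1\<close>, so that its coset part \<open>coset_word m k\<close>
  can be read off from the permutation, which sends \<open>k\<close> to \<open>m + 1\<close>; for the trivial permutation
  the coset part is empty and induction on \<open>m\<close> applies.\<close>
theorem coxeter_A_word_prod_eq_one:
  assumes "group G" and "coxeter_A G s m" and "set l \<subseteq> {1..m}" and "tr_prod l = id"
  shows "word_prod G s l = \<one>\<^bsub>G\<^esub>"
  using assms(2-4)
proof (induction m arbitrary: l)
  case 0
  then show ?case by simp
next
  case (Suc m)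
  define D where "D = G \<times>\<times> sym_group (Suc (Suc m))"
  have "group D"
    unfolding D_def by (rule DirProd_group[OF assms(1) sym_group_is_group])
  moreover have "coxeter_A D (\<lambda>i. (s i, tr i)) (Suc m)"
    unfolding D_def by (rule coxeter_A_DirProd[OF Suc.prems(1) coxeter_A_sym_group])
  ultimately obtain h k where h: "set h \<subseteq> {1..m}" and k: "1 \<le> k" "k \<le> Suc (Suc m)"
    and nf: "word_prod D (\<lambda>i. (s i, tr i)) l = word_prod D (\<lambda>i. (s i, tr i)) (h @ coset_word (Suc m) k)"
    using group.word_prod_normal_form[of D "\<lambda>i. (s i, tr i)" "Suc m" l] Suc.prems(2) by auto
  then have word_eq: "word_prod G s l = word_prod G s (h @ coset_word (Suc m) k)"
    and perm_eq: "tr_prod l = tr_prod (h @ coset_word (Suc m) k)"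
    unfolding D_def word_prod_DirProd word_prod_sym_group by auto
  have "k = Suc (Suc m)"
  proof (rule ccontr)
    assume "k \<noteq> Suc (Suc m)"
    moreover have "tr_prod h (Suc (Suc m)) = Suc (Suc m)"
      using h by (intro tr_prod_fixes) auto
    ultimately have "tr_prod (h @ coset_word (Suc m) k) k = Suc (Suc m)"
      using k tr_prod_coset_word[of k "Suc m"] by simp
    then show False
      using perm_eq Suc.prems(3) \<open>k \<noteq> Suc (Suc m)\<close> by (metis id_apply)
  qed
  then have "word_prod G s l = word_prod G s h" and "tr_prod h = id"
    using word_eq perm_eq Suc.prems(3) by (simp_all add: id_def)
  moreover have "word_prod G s h = \<one>\<^bsub>G\<^esub>"
    using h \<open>tr_prod h = id\<close> by (intro Suc.IH coxeter_A_mono[OF Suc.prems(1)]) auto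
  ultimately show ?case
    by simp
qed

section \<open>The generators of VB_n and the elements lambda\<close>

locale vb_group = group G for G (structure) +
  fixes n :: nat
  assumes G_eq_VB: "G = VB n"
begin

definition rho :: "nat \<Rightarrow> vword set" where
  "rho i = vbc n [rh i]"

definition sigma :: "nat \<Rightarrow> vword set" where
  "sigma i = vbc n [sg i]"

definition rconj :: "nat \<Rightarrow> vword set \<Rightarrow> vword set" where
  "rconj k x = rho k \<otimes> x \<otimes> rho k"

lemma carrier_eq: "carrier G = vbc n ` vb_words n"
  by (simp add: G_eq_VB carrier_VB)

lemma vbc_closed [simp]: "w \<in> vb_words n \<Longrightarrow> vbc n w \<in> carrier G"
  by (simp add: carrier_eq)

lemma vbc_Nil: "vbc n [] = \<one>"
  by (simp add: G_eq_VB one_VB)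

lemma vbc_append: "u \<in> vb_words n \<Longrightarrow> v \<in> vb_words n \<Longrightarrow> vbc n (u @ v) = vbc n u \<otimes> vbc n v"
  by (simp add: G_eq_VB mult_VB)

lemma vbc_Cons: "x \<in> vb_letters n \<Longrightarrow> w \<in> vb_words n \<Longrightarrow> vbc n (x # w) = vbc n [x] \<otimes> vbc n w"
  using vbc_append[of "[x]" w] by simp

lemma vbc_winv: "w \<in> vb_words n \<Longrightarrow> vbc n (winv w) = inv (vbc n w)"
  by (simp add: G_eq_VB inv_VB)

lemma vbc_relator: "(u, v) \<in> vb_relators n \<Longrightarrow> vbc n u = vbc n v"
  by (rule vbc_eqI) (rule vb_rel.relator)

lemma rho_closed [simp]: "i \<in> {1..<n} \<Longrightarrow> rho i \<in> carrier G"
  by (simp add: rho_def)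

lemma sigma_closed [simp]: "i \<in> {1..<n} \<Longrightarrow> sigma i \<in> carrier G"
  by (simp add: sigma_def)

lemma vbc_sgi: "i \<in> {1..<n} \<Longrightarrow> vbc n [sgi i] = inv (sigma i)"
  using vbc_winv[of "[sg i]"] by (simp add: sigma_def flip_def)

lemma rho_rho [simp]:
  assumes "i \<in> {1..<n}"
  shows "rho i \<otimes> rho i = \<one>"
proof -
  have "([rh i, rh i], []) \<in> vb_relators n"
    using assms unfolding vb_relators_def by auto
  then show ?thesis
    using vbc_relator vbc_Cons[of "rh i" "[rh i]"] assms by (simp add: rho_def vbc_Nil)
qed

lemma rho_rho_cancel [simp]: "i \<in> {1..<n} \<Longrightarrow> x \<in> carrier G \<Longrightarrow> rho i \<otimes> (rho i \<otimes> x) = x"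
  by (simp add: m_assoc[symmetric])

lemma inv_rho [simp]: "i \<in> {1..<n} \<Longrightarrow> inv (rho i) = rho i"
  using inv_equality[of "rho i" "rho i"] by simp

lemma vbc_rh_inv: "i \<in> {1..<n} \<Longrightarrow> vbc n [(Rh i, False)] = rho i"
  using vbc_winv[of "[rh i]"] inv_rho[of i] by (simp add: rho_def flip_def)

lemma rho_comm:
  assumes "i \<in> {1..<n}" "j \<in> {1..<n}" "i + 2 \<le> j \<or> j + 2 \<le> i"
  shows "rho i \<otimes> rho j = rho j \<otimes> rho i"
proof -
  have "([rh i, rh j], [rh j, rh i]) \<in> vb_relators n"
    using assms unfolding vb_relators_def by auto
  then show ?thesis
    using vbc_relator vbc_Cons[of "rh i" "[rh j]"] vbc_Cons[of "rh j" "[rh i]"] assms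
    by (simp add: rho_def)
qed

lemma rho_sigma_comm:
  assumes "i \<in> {1..<n}" "j \<in> {1..<n}" "i + 2 \<le> j \<or> j + 2 \<le> i"
  shows "rho i \<otimes> sigma j = sigma j \<otimes> rho i"
proof -
  have "([sg j, rh i], [rh i, sg j]) \<in> vb_relators n"
    using assms unfolding vb_relators_def by auto
  then show ?thesis
    using vbc_relator vbc_Cons[of "rh i" "[sg j]"] vbc_Cons[of "sg j" "[rh i]"] assms
    by (simp add: rho_def sigma_def)
qed

lemma rho_braid:
  assumes "1 \<le> i" "i + 1 < n"
  shows "rho i \<otimes> rho (i + 1) \<otimes> rho i = rho (i + 1) \<otimes> rho i \<otimes> rho (i + 1)"
proof -
  have "([rh i, rh (i + 1), rh i], [rh (i + 1), rh i, rh (i + 1)]) \<in> vb_relators n"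
    using assms unfolding vb_relators_def by auto
  then show ?thesis
    using vbc_relator vbc_Cons[of "rh i" "[rh (i + 1), rh i]"] vbc_Cons[of "rh (i + 1)" "[rh i]"]
      vbc_Cons[of "rh (i + 1)" "[rh i, rh (i + 1)]"] vbc_Cons[of "rh i" "[rh (i + 1)]"] assms
    by (simp add: rho_def m_assoc)
qed

lemma rho_rho_sigma:
  assumes "1 \<le> i" "i + 1 < n"
  shows "rho i \<otimes> rho (i + 1) \<otimes> sigma i = sigma (i + 1) \<otimes> rho i \<otimes> rho (i + 1)"
proof -
  have "([rh i, rh (i + 1), sg i], [sg (i + 1), rh i, rh (i + 1)]) \<in> vb_relators n"
    using assms unfolding vb_relators_def by auto
  then show ?thesis
    using vbc_relator vbc_Cons[of "rh i" "[rh (i + 1), sg i]"] vbc_Cons[of "rh (i + 1)" "[sg i]"]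
      vbc_Cons[of "sg (i + 1)" "[rh i, rh (i + 1)]"] vbc_Cons[of "rh i" "[rh (i + 1)]"] assms
    by (simp add: rho_def sigma_def m_assoc)
qed

lemma coxeter_A_rho: "coxeter_A G rho (n - 1)"
  unfolding coxeter_A_def
proof (intro conjI ballI allI impI)
  fix i j
  assume "i \<in> {1..n - 1}" "j \<in> {1..n - 1}" "i + 2 \<le> j"
  then show "rho i \<otimes> rho j = rho j \<otimes> rho i"
    by (intro rho_comm) auto
next
  fix i
  assume "1 \<le> i \<and> i + 1 \<le> n - 1"
  then show "rho i \<otimes> rho (i + 1) \<otimes> rho i = rho (i + 1) \<otimes> rho i \<otimes> rho (i + 1)"
    by (intro rho_braid) auto
next
  fix i
  assume "i \<in> {1..n - 1}"
  then have "i \<in> {1..<n}"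
    by auto
  then show "rho i \<in> carrier G" "rho i \<otimes> rho i = \<one>"
    by simp_all
qed

lemma rconj_closed [simp]: "k \<in> {1..<n} \<Longrightarrow> x \<in> carrier G \<Longrightarrow> rconj k x \<in> carrier G"
  by (simp add: rconj_def)

lemma rconj_mult:
  "k \<in> {1..<n} \<Longrightarrow> x \<in> carrier G \<Longrightarrow> y \<in> carrier G \<Longrightarrow> rconj k (x \<otimes> y) = rconj k x \<otimes> rconj k y"
  by (simp add: rconj_def m_assoc)

lemma rconj_inv: "k \<in> {1..<n} \<Longrightarrow> x \<in> carrier G \<Longrightarrow> rconj k (inv x) = inv (rconj k x)"
  by (simp add: rconj_def inv_mult_group m_assoc)

lemma rconj_rconj [simp]: "k \<in> {1..<n} \<Longrightarrow> x \<in> carrier G \<Longrightarrow> rconj k (rconj k x) = x"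
  by (simp add: rconj_def m_assoc)

lemma rconj_rho_far:
  "i \<in> {1..<n} \<Longrightarrow> j \<in> {1..<n} \<Longrightarrow> i + 2 \<le> j \<or> j + 2 \<le> i \<Longrightarrow> rconj i (rho j) = rho j"
  using rho_comm[of i j] by (simp add: rconj_def m_assoc)

lemma rconj_sigma_far:
  "i \<in> {1..<n} \<Longrightarrow> j \<in> {1..<n} \<Longrightarrow> i + 2 \<le> j \<or> j + 2 \<le> i \<Longrightarrow> rconj i (sigma j) = sigma j"
  using rho_sigma_comm[of i j] by (simp add: rconj_def m_assoc)

lemma rconj_comm:
  assumes "i \<in> {1..<n}" "j \<in> {1..<n}" "i + 2 \<le> j \<or> j + 2 \<le> i" "x \<in> carrier G"
  shows "rconj i (rconj j x) = rconj j (rconj i x)"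
proof -
  have "rconj i (rconj j x) = (rho i \<otimes> rho j) \<otimes> x \<otimes> (rho j \<otimes> rho i)"
    using assms by (simp add: rconj_def m_assoc)
  also have "\<dots> = (rho j \<otimes> rho i) \<otimes> x \<otimes> (rho i \<otimes> rho j)"
    using rho_comm[OF assms(1-3)] by simp
  finally show ?thesis
    using assms by (simp add: rconj_def m_assoc)
qed

lemma rconj_braid:
  assumes "1 \<le> i" "i + 1 < n" "x \<in> carrier G"
  shows "rconj i (rconj (i + 1) (rconj i x)) = rconj (i + 1) (rconj i (rconj (i + 1) x))"
proof -
  have "rconj i (rconj (i + 1) (rconj i x)) =
      (rho i \<otimes> rho (i + 1) \<otimes> rho i) \<otimes> x \<otimes> (rho i \<otimes> rho (i + 1) \<otimes> rho i)"
    using assms by (simp add: rconj_def m_assoc)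
  also have "\<dots> = (rho (i + 1) \<otimes> rho i \<otimes> rho (i + 1)) \<otimes> x \<otimes> (rho (i + 1) \<otimes> rho i \<otimes> rho (i + 1))"
    using rho_braid[OF assms(1,2)] by simp
  finally show ?thesis
    using assms by (simp add: rconj_def m_assoc)
qed

lemma rconj_rho_braid: "1 \<le> i \<Longrightarrow> i + 1 < n \<Longrightarrow> rconj i (rconj (i + 1) (rho i)) = rho (i + 1)"
  using rho_braid[of i] by (simp add: rconj_def m_assoc)

lemma rconj_rconj_sigma:
  assumes "1 \<le> i" "i + 1 < n"
  shows "rconj i (rconj (i + 1) (sigma i)) = sigma (i + 1)"
proof -
  have "rconj i (rconj (i + 1) (sigma i)) = (rho i \<otimes> rho (i + 1) \<otimes> sigma i) \<otimes> (rho (i + 1) \<otimes> rho i)"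
    using assms by (simp add: rconj_def m_assoc)
  also have "\<dots> = sigma (i + 1) \<otimes> (rho i \<otimes> (rho (i + 1) \<otimes> (rho (i + 1) \<otimes> rho i)))"
    using rho_rho_sigma[OF assms] assms by (simp add: m_assoc)
  finally show ?thesis
    using assms by simp
qed

text \<open>\<open>lambda_span True a d\<close> is \<open>\<lambda>\<^sub>a\<^sub>,\<^sub>a\<^sub>+\<^sub>d\<^sub>+\<^sub>1\<close> and \<open>lambda_span False a d\<close> is
  \<open>\<lambda>\<^sub>a\<^sub>+\<^sub>d\<^sub>+\<^sub>1\<^sub>,\<^sub>a\<close>.\<close>
primrec lambda_span :: "bool \<Rightarrow> nat \<Rightarrow> nat \<Rightarrow> vword set" where
  "lambda_span e a 0 = (if e then rho a \<otimes> inv (sigma a) else inv (sigma a) \<otimes> rho a)"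
| "lambda_span e a (Suc d) = rconj (a + d + 1) (lambda_span e a d)"

definition Lambda :: "nat \<Rightarrow> nat \<Rightarrow> vword set" where
  "Lambda a b = (if a < b then lambda_span True a (b - a - 1) else lambda_span False b (a - b - 1))"

lemma lambda_span_closed [simp]: "1 \<le> a \<Longrightarrow> a + d < n \<Longrightarrow> lambda_span e a d \<in> carrier G"
  by (induction d) auto

lemma rconj_lambda_span_0_far:
  "k \<in> {1..<n} \<Longrightarrow> a \<in> {1..<n} \<Longrightarrow> k + 2 \<le> a \<or> a + 2 \<le> k \<Longrightarrow>
    rconj k (lambda_span e a 0) = lambda_span e a 0"
  by (simp add: rconj_mult rconj_inv rconj_rho_far rconj_sigma_far)

lemma rconj_lambda_span_0_self: "a \<in> {1..<n} \<Longrightarrow> rconj a (lambda_span e a 0) = lambda_span (\<not> e) a 0"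
  by (simp add: rconj_def m_assoc)

lemma rconj_lambda_span_0_shift:
  "1 \<le> a \<Longrightarrow> a + 1 < n \<Longrightarrow> rconj a (rconj (a + 1) (lambda_span e a 0)) = lambda_span e (a + 1) 0"
  using rconj_rho_braid[of a] rconj_rconj_sigma[of a] by (simp add: rconj_mult rconj_inv)

lemma rconj_lambda_span_0_braid:
  assumes "1 \<le> a" "a + 1 < n"
  shows "rconj a (lambda_span e (a + 1) 0) = rconj (a + 1) (lambda_span e a 0)"
proof -
  have "rconj a (lambda_span e (a + 1) 0) = rconj a (rconj a (rconj (a + 1) (lambda_span e a 0)))"
    using rconj_lambda_span_0_shift[OF assms] by simp
  then show ?thesis
    using assms by simp
qed

lemma rconj_lambda_span_above:
  "1 \<le> a \<Longrightarrow> a + d + 2 \<le> k \<Longrightarrow> k < n \<Longrightarrow> rconj k (lambda_span e a d) = lambda_span e a d"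
proof (induction d)
  case 0
  then show ?case using rconj_lambda_span_0_far[of k a e] by simp
next
  case (Suc d)
  then show ?case by (simp add: rconj_comm[of k])
qed

lemma rconj_lambda_span_below:
  "1 \<le> k \<Longrightarrow> k + 2 \<le> a \<Longrightarrow> a + d < n \<Longrightarrow> rconj k (lambda_span e a d) = lambda_span e a d"
proof (induction d)
  case 0
  then show ?case using rconj_lambda_span_0_far[of k a e] by simp
next
  case (Suc d)
  then show ?case by (simp add: rconj_comm[of k])
qed

lemma rconj_lambda_span_inside:
  "1 \<le> a \<Longrightarrow> a < k \<Longrightarrow> k < a + d \<Longrightarrow> a + d < n \<Longrightarrow> rconj k (lambda_span e a d) = lambda_span e a d"
proof (induction d)
  case 0
  then show ?case by simp
next
  case (Suc d)
  show ?case
  proof (cases "k < a + d")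
    case True
    then show ?thesis
      using Suc by (simp add: rconj_comm[of k])
  next
    case False
    then have "k = a + d"
      using Suc.prems by simp
    moreover obtain d' where d: "d = Suc d'"
      using Suc.prems \<open>k = a + d\<close> by (cases d) auto
    ultimately have k: "k = a + d' + 1"
      by simp
    have "rconj (k + 1) (lambda_span e a d') = lambda_span e a d'"
      using Suc.prems k d by (intro rconj_lambda_span_above) auto
    then show ?thesis
      using rconj_braid[of k "lambda_span e a d'"] Suc.prems d k by (simp add: add.commute)
  qed
qed

lemma rconj_lambda_span_start:
  "1 \<le> a \<Longrightarrow> a + d + 1 < n \<Longrightarrow> rconj a (lambda_span e a (Suc d)) = lambda_span e (a + 1) d"
proof (induction d)
  case 0
  then show ?case using rconj_lambda_span_0_shift[of a e] by simp
next
  case (Suc d)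
  then show ?case by (simp add: rconj_comm[of a])
qed

lemma rconj_lambda_span_before:
  "2 \<le> a \<Longrightarrow> a + d < n \<Longrightarrow> rconj (a - 1) (lambda_span e a d) = lambda_span e (a - 1) (Suc d)"
proof (induction d)
  case 0
  then show ?case using rconj_lambda_span_0_braid[of "a - 1" e] by simp
next
  case (Suc d)
  have "rconj (a - 1) (lambda_span e a (Suc d)) = rconj (a + d + 1) (rconj (a - 1) (lambda_span e a d))"
    using Suc.prems by (simp, intro rconj_comm) auto
  then show ?case
    using Suc by simp
qed

lemma rconj_lambda_span:
  assumes "1 \<le> x" "x + d < n" "k \<in> {1..<n}" "\<not> (k = x \<and> d = 0)"
  shows "tr k x < tr k (x + d + 1) \<and>
    rconj k (lambda_span e x d) = lambda_span e (tr k x) (tr k (x + d + 1) - tr k x - 1)"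
proof -
  consider "k + 2 \<le> x" | "k + 1 = x" | "k = x" "d > 0" | "x < k" "k < x + d"
    | "k = x + d" "x < k" | "k = x + d + 1" | "x + d + 1 < k"
    using assms(4) by linarith
  then show ?thesis
  proof cases
    case 1
    then show ?thesis using assms rconj_lambda_span_below[of k x d e] by (auto simp: tr_def)
  next
    case 2
    then show ?thesis using assms rconj_lambda_span_before[of x d e] by (auto simp: tr_def)
  next
    case 3
    then obtain d' where "d = Suc d'" by (cases d) auto
    then show ?thesis using assms 3 rconj_lambda_span_start[of x d' e] by (auto simp: tr_def)
  next
    case 4
    then show ?thesis using assms rconj_lambda_span_inside[of x k d e] by (auto simp: tr_def)
  next
    case 5
    then obtain d' where "d = Suc d'" by (cases d) auto
    then show ?thesis using assms 5 by (auto simp: tr_def)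
  next
    case 6
    then show ?thesis using assms by (auto simp: tr_def)
  next
    case 7
    then show ?thesis using assms rconj_lambda_span_above[of x d k e] by (auto simp: tr_def)
  qed
qed

lemma Lambda_closed [simp]: "a \<in> {1..n} \<Longrightarrow> b \<in> {1..n} \<Longrightarrow> a \<noteq> b \<Longrightarrow> Lambda a b \<in> carrier G"
  by (auto simp: Lambda_def)

lemma Lambda_adjacent:
  "Lambda a (Suc a) = rho a \<otimes> inv (sigma a)" "Lambda (Suc a) a = inv (sigma a) \<otimes> rho a"
  by (simp_all add: Lambda_def)

theorem rconj_Lambda:
  assumes "a \<in> {1..n}" "b \<in> {1..n}" "a \<noteq> b" "k \<in> {1..<n}"
  shows "rconj k (Lambda a b) = Lambda (tr k a) (tr k b)"
proof -
  have span: "rconj k (lambda_span e x (y - x - 1)) =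
      (if e then Lambda (tr k x) (tr k y) else Lambda (tr k y) (tr k x))"
    if "1 \<le> x" "x < y" "y \<le> n" for x y e
  proof (cases "k = x \<and> y = x + 1")
    case True
    then show ?thesis
      using that assms(4) rconj_lambda_span_0_self[of x e] by (auto simp: Lambda_def tr_def)
  next
    case False
    have "x + (y - x - 1) + 1 = y"
      using that by simp
    then have "tr k x < tr k y \<and>
        rconj k (lambda_span e x (y - x - 1)) = lambda_span e (tr k x) (tr k y - tr k x - 1)"
      using rconj_lambda_span[of x "y - x - 1" k e] that assms(4) False by auto
    then show ?thesis
      by (auto simp: Lambda_def)
  qed
  show ?thesis
  proof (cases "a < b")
    case True
    then show ?thesis using span[of a b True] assms by (simp add: Lambda_def)
  next
    case False
    then show ?thesis using span[of b a False] assms by (simp add: Lambda_def)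
  qed
qed

end

lemma rchain_Suc: "rchain x (Suc (Suc (x + d))) = rh (Suc (x + d)) # rchain x (Suc (x + d))"
  unfolding rchain_def
  by (simp only: upt_Suc_append[of "Suc x" "Suc (x + d)"] le_add1 Suc_le_mono rev_append) simp

lemma rchain_self: "rchain x (Suc x) = []"
  by (simp add: rchain_def)

lemma rchain_in_vb_words: "1 \<le> x \<Longrightarrow> y \<le> n \<Longrightarrow> rchain x y \<in> vb_words n"
  by (auto simp: rchain_def vb_words_def vb_letters_def)

lemma lam_in_vb_words: "a \<in> {1..n} \<Longrightarrow> b \<in> {1..n} \<Longrightarrow> a \<noteq> b \<Longrightarrow> lam a b \<in> vb_words n"
  by (auto simp: lam_def rchain_in_vb_words)

context vb_group
begin

lemma vbc_rchain_conj:
  assumes "1 \<le> x" "w \<in> vb_words n" "vbc n w = lambda_span e x 0"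
  shows "x + d < n \<Longrightarrow> vbc n (rchain x (x + d + 1) @ w @ rev (rchain x (x + d + 1))) = lambda_span e x d"
proof (induction d)
  case 0
  then show ?case using assms by (simp add: rchain_self)
next
  case (Suc d)
  define R where "R = rchain x (x + d + 1)"
  have "R \<in> vb_words n"
    using Suc.prems assms by (simp add: R_def rchain_in_vb_words)
  then have words: "R @ w @ rev R \<in> vb_words n" "rh (x + d + 1) \<in> vb_letters n"
    using Suc.prems assms by auto
  have "rchain x (x + Suc d + 1) @ w @ rev (rchain x (x + Suc d + 1)) =
      rh (x + d + 1) # (R @ w @ rev R) @ [rh (x + d + 1)]"
    using rchain_Suc[of x d] by (simp add: R_def)
  moreover have "vbc n (rh (x + d + 1) # (R @ w @ rev R) @ [rh (x + d + 1)]) =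
      rconj (x + d + 1) (vbc n (R @ w @ rev R))"
    using words vbc_Cons[of "rh (x + d + 1)" "(R @ w @ rev R) @ [rh (x + d + 1)]"]
      vbc_append[of "R @ w @ rev R" "[rh (x + d + 1)]"]
    by (simp add: rho_def rconj_def m_assoc)
  ultimately show ?case
    using Suc by (simp add: R_def)
qed

lemma vbc_lam: "a \<in> {1..n} \<Longrightarrow> b \<in> {1..n} \<Longrightarrow> a \<noteq> b \<Longrightarrow> vbc n (lam a b) = Lambda a b"
proof (cases "a < b")
  case True
  assume "a \<in> {1..n}" "b \<in> {1..n}"
  moreover have "vbc n [rh a, sgi a] = lambda_span True a 0"
    using True calculation vbc_Cons[of "rh a" "[sgi a]"] by (simp add: rho_def vbc_sgi)
  ultimately show ?thesis
    using True vbc_rchain_conj[of a "[rh a, sgi a]" True "b - a - 1"]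
    by (simp add: lam_def Lambda_def)
next
  case False
  assume "a \<in> {1..n}" "b \<in> {1..n}" "a \<noteq> b"
  moreover have "vbc n [sgi b, rh b] = lambda_span False b 0"
    using False calculation vbc_Cons[of "sgi b" "[rh b]"] by (simp add: rho_def vbc_sgi)
  ultimately show ?thesis
    using False vbc_rchain_conj[of b "[sgi b, rh b]" False "a - b - 1"]
    by (simp add: lam_def Lambda_def)
qed

end

section \<open>Decomposition of VB_n into lambdas and rhos\<close>

definition lambda_indices :: "nat \<Rightarrow> (nat \<times> nat \<times> bool) set" where
  "lambda_indices n = {(a, b, e). a \<in> {1..n} \<and> b \<in> {1..n} \<and> a \<noteq> b}"

definition tr_act :: "nat list \<Rightarrow> nat \<times> nat \<times> bool \<Rightarrow> nat \<times> nat \<times> bool" where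
  "tr_act p = (\<lambda>(a, b, e). (tr_prod p a, tr_prod p b, e))"

lemma tr_act_lambda_indices:
  assumes "set p \<subseteq> {1..<n}" and "y \<in> lambda_indices n"
  shows "tr_act p y \<in> lambda_indices n"
proof -
  obtain a b e where "y = (a, b, e)" "a \<in> {1..n}" "b \<in> {1..n}" "a \<noteq> b"
    using assms(2) by (auto simp: lambda_indices_def)
  then show ?thesis
    using tr_prod_in_range[OF assms(1)] inj_eq[OF inj_tr_prod]
    by (simp add: lambda_indices_def tr_act_def)
qed

lemma tr_act_lambda_indices_list:
  "set p \<subseteq> {1..<n} \<Longrightarrow> set u \<subseteq> lambda_indices n \<Longrightarrow> set (map (tr_act p) u) \<subseteq> lambda_indices n"
  unfolding set_map image_subset_iff using tr_act_lambda_indices by blast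

context vb_group
begin

definition lambda_letter :: "nat \<times> nat \<times> bool \<Rightarrow> vword set" where
  "lambda_letter = (\<lambda>(a, b, e). if e then Lambda a b else inv (Lambda a b))"

lemma lambda_letter_closed: "y \<in> lambda_indices n \<Longrightarrow> lambda_letter y \<in> carrier G"
  by (auto simp: lambda_letter_def lambda_indices_def)

lemma lambda_word_closed: "set u \<subseteq> lambda_indices n \<Longrightarrow> word_prod G lambda_letter u \<in> carrier G"
  by (rule word_prod_closed) (auto simp: lambda_letter_closed)

lemma rho_word_closed: "set p \<subseteq> {1..<n} \<Longrightarrow> word_prod G rho p \<in> carrier G"
  by (rule word_prod_closed) auto

lemma vbc_map_rh: "set p \<subseteq> {1..<n} \<Longrightarrow> map rh p \<in> vb_words n \<and> vbc n (map rh p) = word_prod G rho p"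
proof (induction p)
  case (Cons i p)
  then have "rh i \<in> vb_letters n" "map rh p \<in> vb_words n" "vbc n (map rh p) = word_prod G rho p"
    by simp_all
  then show ?case
    using vbc_Cons[of "rh i" "map rh p"] by (simp add: rho_def[symmetric])
qed (simp add: vbc_Nil)

lemma rho_word_Lambda:
  assumes "set p \<subseteq> {1..<n}" and ab: "a \<in> {1..n}" "b \<in> {1..n}" "a \<noteq> b"
  shows "word_prod G rho p \<otimes> Lambda a b = Lambda (tr_prod p a) (tr_prod p b) \<otimes> word_prod G rho p"
  using assms(1)
proof (induction p)
  case Nil
  then show ?case using ab by simp
next
  case (Cons k p)
  have k: "k \<in> {1..<n}" and p: "set p \<subseteq> {1..<n}"
    using Cons.prems by auto
  have image: "tr_prod p a \<in> {1..n}" "tr_prod p b \<in> {1..n}" "tr_prod p a \<noteq> tr_prod p b"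
    using tr_prod_in_range[OF p] ab inj_eq[OF inj_tr_prod] by auto
  have "word_prod G rho (k # p) \<otimes> Lambda a b = rho k \<otimes> (Lambda (tr_prod p a) (tr_prod p b) \<otimes> word_prod G rho p)"
    using Cons p k ab by (simp add: rho_word_closed m_assoc)
  also have "\<dots> = rconj k (Lambda (tr_prod p a) (tr_prod p b)) \<otimes> (rho k \<otimes> word_prod G rho p)"
    using image k p by (simp add: rconj_def rho_word_closed m_assoc)
  finally show ?case
    using rconj_Lambda[OF image k] by simp
qed

lemma rho_word_lambda_letter:
  assumes p: "set p \<subseteq> {1..<n}" and y: "y \<in> lambda_indices n"
  shows "word_prod G rho p \<otimes> lambda_letter y = lambda_letter (tr_act p y) \<otimes> word_prod G rho p"
proof -
  obtain a b e where abe: "y = (a, b, e)" and ab: "a \<in> {1..n}" "b \<in> {1..n}" "a \<noteq> b"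
    using y by (auto simp: lambda_indices_def)
  define X where "X = word_prod G rho p"
  define L where "L = Lambda a b"
  define L' where "L' = Lambda (tr_prod p a) (tr_prod p b)"
  have closed: "X \<in> carrier G" "L \<in> carrier G" "L' \<in> carrier G"
    using tr_act_lambda_indices[OF p y] p ab
    by (auto simp: X_def L_def L'_def rho_word_closed abe tr_act_def lambda_indices_def)
  have push: "X \<otimes> L = L' \<otimes> X"
    using rho_word_Lambda[OF p ab] by (simp add: X_def L_def L'_def)
  have "X \<otimes> inv L = inv L' \<otimes> (L' \<otimes> X) \<otimes> inv L"
    using closed by (simp add: m_assoc[symmetric])
  also have "\<dots> = inv L' \<otimes> (X \<otimes> L) \<otimes> inv L"
    using push by simp
  also have "\<dots> = inv L' \<otimes> X"
    using closed by (simp add: m_assoc)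
  finally have "X \<otimes> inv L = inv L' \<otimes> X" .
  with push show ?thesis
    by (simp add: abe lambda_letter_def tr_act_def X_def L_def L'_def)
qed

lemma rho_word_lambda_word:
  assumes p: "set p \<subseteq> {1..<n}"
  shows "set u \<subseteq> lambda_indices n \<Longrightarrow>
    word_prod G rho p \<otimes> word_prod G lambda_letter u =
    word_prod G lambda_letter (map (tr_act p) u) \<otimes> word_prod G rho p"
proof (induction u)
  case Nil
  then show ?case using p by (simp add: rho_word_closed)
next
  case (Cons y u)
  then have y: "y \<in> lambda_indices n" and u: "set u \<subseteq> lambda_indices n"
    by auto
  have closed: "word_prod G rho p \<in> carrier G" "lambda_letter y \<in> carrier G"
    "lambda_letter (tr_act p y) \<in> carrier G" "word_prod G lambda_letter u \<in> carrier G"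
    "word_prod G lambda_letter (map (tr_act p) u) \<in> carrier G"
    using p y u tr_act_lambda_indices[OF p y] tr_act_lambda_indices_list[OF p u]
    by (simp_all add: rho_word_closed lambda_letter_closed lambda_word_closed)
  have "word_prod G rho p \<otimes> word_prod G lambda_letter (y # u) =
      lambda_letter (tr_act p y) \<otimes> (word_prod G rho p \<otimes> word_prod G lambda_letter u)"
    using rho_word_lambda_letter[OF p y] closed by (simp add: m_assoc[symmetric])
  then show ?case
    using Cons.IH[OF u] closed by (simp add: m_assoc)
qed

lemma vbc_letter_decomposition:
  assumes "x \<in> vb_letters n"
  obtains v where "set v \<subseteq> lambda_indices n"
    "vbc n [x] = word_prod G lambda_letter v \<otimes> rho (gidx (fst x))"
proof -
  obtain g e where x: "x = (g, e)"
    by fastforce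
  define i where "i = gidx g"
  have i: "i \<in> {1..<n}" "i + 1 \<in> {1..n}" "i \<in> {1..n}"
    using assms by (auto simp: x i_def)
  have L: "Lambda (i + 1) i \<in> carrier G" "Lambda i (i + 1) \<in> carrier G"
    using i by auto
  show ?thesis
  proof (cases g)
    case Rh
    then have "vbc n [x] = word_prod G lambda_letter [] \<otimes> rho i"
      using i by (cases e) (simp_all add: x i_def rho_def vbc_rh_inv)
    then show ?thesis
      using that[of "[]"] by (simp add: i_def x)
  next
    case Sg
    show ?thesis
    proof (cases e)
      case True
      have "sigma i = inv (Lambda i (Suc i)) \<otimes> rho i"
        using i by (simp add: Lambda_adjacent inv_mult_group m_assoc)
      then have "vbc n [x] = word_prod G lambda_letter [(i, Suc i, False)] \<otimes> rho i"
        using i L True Sg by (simp add: x i_def sigma_def lambda_letter_def)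
      then show ?thesis
        using that[of "[(i, Suc i, False)]"] i by (simp add: i_def x lambda_indices_def)
    next
      case False
      have "vbc n [x] = word_prod G lambda_letter [(Suc i, i, True)] \<otimes> rho i"
        using i L False Sg by (simp add: x i_def vbc_sgi lambda_letter_def Lambda_adjacent m_assoc)
      then show ?thesis
        using that[of "[(Suc i, i, True)]"] i by (simp add: i_def x lambda_indices_def)
    qed
  qed
qed

theorem vbc_decomposition:
  "w \<in> vb_words n \<Longrightarrow> \<exists>u p. set u \<subseteq> lambda_indices n \<and> set p \<subseteq> {1..<n} \<and>
    vbc n w = word_prod G lambda_letter u \<otimes> word_prod G rho p"
proof (induction w rule: rev_induct)
  case Nil
  show ?case
    by (intro exI[of _ "[]"]) (simp add: vbc_Nil)
next
  case (snoc x w)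
  then have w: "w \<in> vb_words n" and x: "x \<in> vb_letters n"
    by auto
  obtain u p where u: "set u \<subseteq> lambda_indices n" and p: "set p \<subseteq> {1..<n}"
    and decomp: "vbc n w = word_prod G lambda_letter u \<otimes> word_prod G rho p"
    using snoc w by blast
  obtain v where v: "set v \<subseteq> lambda_indices n"
    and letter: "vbc n [x] = word_prod G lambda_letter v \<otimes> rho (gidx (fst x))"
    using vbc_letter_decomposition[OF x] .
  define i where "i = gidx (fst x)"
  have i: "i \<in> {1..<n}"
    using x by (cases x) (simp add: i_def)
  have v': "set (map (tr_act p) v) \<subseteq> lambda_indices n"
    using tr_act_lambda_indices_list[OF p v] .
  have "vbc n (w @ [x]) = word_prod G lambda_letter u \<otimes>
      (word_prod G rho p \<otimes> word_prod G lambda_letter v) \<otimes> rho i"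
    using w x decomp letter u p v i
    by (simp add: vbc_append i_def lambda_word_closed rho_word_closed m_assoc)
  also have "\<dots> = word_prod G lambda_letter (u @ map (tr_act p) v) \<otimes> word_prod G rho (p @ [i])"
  proof -
    have "word_prod G lambda_letter (u @ map (tr_act p) v) =
        word_prod G lambda_letter u \<otimes> word_prod G lambda_letter (map (tr_act p) v)"
      using u v' by (intro word_prod_append) (auto intro: lambda_letter_closed)
    moreover have "word_prod G rho (p @ [i]) = word_prod G rho p \<otimes> rho i"
      using p i by (subst word_prod_append) auto
    ultimately show ?thesis
      using rho_word_lambda_word[OF p v] u v' p i
      by (simp add: lambda_word_closed rho_word_closed m_assoc)
  qed
  finally show ?case
    using u v' p i by (intro exI[of _ "u @ map (tr_act p) v"] exI[of _ "p @ [i]"]) auto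
qed

end

section \<open>The permutation homomorphisms and their kernels\<close>

lemma iota1_Nil [simp]: "iota1 [] = id"
  by (simp add: iota1_def)

lemma iota1_Cons [simp]: "iota1 (x # w) = tr (gidx (fst x)) \<circ> iota1 w"
  by (simp add: iota1_def)

lemma iota1_append [simp]: "iota1 (u @ v) = iota1 u \<circ> iota1 v"
  by (induction u) (auto simp: comp_assoc)

lemma iota2_Nil [simp]: "iota2 [] = id"
  by (simp add: iota2_def)

lemma iota2_Cons [simp]: "iota2 (x # w) = iota2_letter x \<circ> iota2 w"
  by (simp add: iota2_def)

lemma iota2_append [simp]: "iota2 (u @ v) = iota2 u \<circ> iota2 v"
  by (induction u) (auto simp: comp_assoc)

lemma tr_comp_tr: "tr i \<circ> tr i = id"
  by (auto simp: tr_def)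

lemma tr_comm: "i + 2 \<le> j \<Longrightarrow> tr i \<circ> tr j = tr j \<circ> tr i"
  by (auto simp: tr_def)

lemma tr_braid: "tr i (tr (Suc i) (tr i a)) = tr (Suc i) (tr i (tr (Suc i) a))"
  by (simp add: tr_def)

lemma vb_rel_iota: "(u, v) \<in> vb_rel n \<Longrightarrow> iota1 u = iota1 v \<and> iota2 u = iota2 v"
proof (induction rule: vb_rel.induct)
  case (cancel x)
  then show ?case
    by (cases x; cases "fst x") (auto simp: flip_def tr_comp_tr)
next
  case (relator u v)
  then show ?case unfolding vb_relators_def
    by (auto simp: tr_comm tr_comm[symmetric] comp_assoc tr_comp_tr fun_eq_iff tr_braid)
qed auto

lemma iota_map_rh: "iota1 (map rh p) = tr_prod p" "iota2 (map rh p) = tr_prod p"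
  by (induction p) auto

lemma tr_conj_transpose: "x < k \<Longrightarrow> tr k \<circ> Transposition.transpose x k \<circ> tr k = Transposition.transpose x (Suc k)"
  by (auto simp: fun_eq_iff tr_def Transposition.transpose_def)

lemma iota_rchain_conj:
  assumes "iota1 w = id" "iota2 w = tr x"
  shows "iota1 (rchain x (x + d + 1) @ w @ rev (rchain x (x + d + 1))) = id \<and>
    iota2 (rchain x (x + d + 1) @ w @ rev (rchain x (x + d + 1))) = Transposition.transpose x (x + d + 1)"
proof (induction d)
  case 0
  then show ?case using assms by (simp add: rchain_self tr_eq_transpose)
next
  case (Suc d)
  define C where "C = rchain x (x + d + 1) @ w @ rev (rchain x (x + d + 1))"
  have C: "rchain x (x + Suc d + 1) @ w @ rev (rchain x (x + Suc d + 1)) = rh (x + d + 1) # C @ [rh (x + d + 1)]"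
    using rchain_Suc[of x d] by (simp add: C_def)
  have "iota1 C = id \<and> iota2 C = Transposition.transpose x (x + d + 1)"
    unfolding C_def by (rule Suc.IH)
  then show ?case
    unfolding C using tr_conj_transpose[of x "x + d + 1"] by (simp add: tr_comp_tr comp_assoc)
qed

lemma iota_lam: "a \<noteq> b \<Longrightarrow> iota1 (lam a b) = id \<and> iota2 (lam a b) = Transposition.transpose a b"
proof (cases "a < b")
  case True
  have "iota1 [rh a, sgi a] = id" "iota2 [rh a, sgi a] = tr a"
    by (simp_all add: tr_comp_tr)
  from iota_rchain_conj[OF this, of "b - a - 1"] show ?thesis
    using True by (simp add: lam_def)
next
  case False
  assume "a \<noteq> b"
  then have "b < a"
    using False by simp
  have "iota1 [sgi b, rh b] = id" "iota2 [sgi b, rh b] = tr b"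
    by (simp_all add: tr_comp_tr)
  from iota_rchain_conj[OF this, of "a - b - 1"] show ?thesis
    using \<open>b < a\<close> by (simp add: lam_def transpose_commute)
qed

definition lambda_tr_word :: "nat \<times> nat \<times> bool \<Rightarrow> nat list" where
  "lambda_tr_word = (\<lambda>(a, b, e). transp_word (min a b) (max a b - min a b - 1))"

lemma set_lambda_tr_word: "y \<in> lambda_indices n \<Longrightarrow> set (lambda_tr_word y) \<subseteq> {1..n - 1}"
  using set_transp_word by (fastforce simp: lambda_indices_def lambda_tr_word_def)

lemma tr_prod_lambda_tr_word:
  "y = (a, b, e) \<Longrightarrow> a \<noteq> b \<Longrightarrow> tr_prod (lambda_tr_word y) = Transposition.transpose a b"
  by (auto simp: lambda_tr_word_def tr_prod_transp_word min_def max_def transpose_commute)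

definition lambda_letter_word :: "nat \<times> nat \<times> bool \<Rightarrow> vword" where
  "lambda_letter_word = (\<lambda>(a, b, e). if e then lam a b else winv (lam a b))"

context vb_group
begin

text \<open>\<open>VP n\<close> and \<open>Hn n\<close> are the kernels of the maps on classes induced by \<open>iota1\<close> and \<open>iota2\<close>.\<close>
context
  fixes \<psi> :: "vword \<Rightarrow> nat \<Rightarrow> nat"
  assumes \<psi>_Nil: "\<psi> [] = id" and \<psi>_append: "\<And>u v. \<psi> (u @ v) = \<psi> u \<circ> \<psi> v"
    and \<psi>_vb_rel: "\<And>u v. (u, v) \<in> vb_rel n \<Longrightarrow> \<psi> u = \<psi> v"
begin

lemma vbc_in_kernel_iff:
  assumes "w \<in> vb_words n"
  shows "vbc n w \<in> {c \<in> carrier G. \<forall>w\<in>c. \<psi> w = id} \<longleftrightarrow> \<psi> w = id"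
proof
  assume "vbc n w \<in> {c \<in> carrier G. \<forall>w\<in>c. \<psi> w = id}"
  then show "\<psi> w = id"
    using in_vbc_self[OF assms] by blast
next
  assume "\<psi> w = id"
  then have "\<forall>v\<in>vbc n w. \<psi> v = id"
    using \<psi>_vb_rel by (auto simp: in_vbc_iff)
  then show "vbc n w \<in> {c \<in> carrier G. \<forall>w\<in>c. \<psi> w = id}"
    using assms by simp
qed

lemma kernel_cases:
  assumes "x \<in> {c \<in> carrier G. \<forall>w\<in>c. \<psi> w = id}"
  obtains w where "w \<in> vb_words n" "x = vbc n w" "\<psi> w = id"
proof -
  obtain w where "w \<in> vb_words n" "x = vbc n w"
    using assms unfolding carrier_eq by blast
  then show ?thesis
    using that vbc_in_kernel_iff assms by blast
qed

lemma winv_in_kernel: "w \<in> vb_words n \<Longrightarrow> \<psi> (winv w) \<circ> \<psi> w = id"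
  using \<psi>_vb_rel[OF winv_append_cancel] by (simp add: \<psi>_append \<psi>_Nil)

lemma kernel_subgroup: "subgroup {c \<in> carrier G. \<forall>w\<in>c. \<psi> w = id} G" (is "subgroup ?K G")
proof (rule subgroupI)
  show "?K \<subseteq> carrier G"
    by blast
next
  have "vbc n [] \<in> ?K"
    using vbc_in_kernel_iff[of "[]"] by (simp add: \<psi>_Nil)
  then show "?K \<noteq> {}"
    by blast
next
  fix x
  assume "x \<in> ?K"
  then obtain w where "w \<in> vb_words n" "x = vbc n w" "\<psi> w = id"
    by (rule kernel_cases)
  then show "inv x \<in> ?K"
    using vbc_in_kernel_iff[of "winv w"] winv_in_kernel[of w] by (simp add: vbc_winv[symmetric])
next
  fix x y
  assume "x \<in> ?K" "y \<in> ?K"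
  obtain u where "u \<in> vb_words n" "x = vbc n u" "\<psi> u = id"
    using \<open>x \<in> ?K\<close> by (rule kernel_cases)
  moreover obtain v where "v \<in> vb_words n" "y = vbc n v" "\<psi> v = id"
    using \<open>y \<in> ?K\<close> by (rule kernel_cases)
  ultimately show "x \<otimes> y \<in> ?K"
    using vbc_in_kernel_iff[of "u @ v"] by (simp add: vbc_append \<psi>_append)
qed

lemma kernel_normal: "{c \<in> carrier G. \<forall>w\<in>c. \<psi> w = id} \<lhd> G" (is "?K \<lhd> G")
proof -
  have "g \<otimes> x \<otimes> inv g \<in> ?K" if "g \<in> carrier G" "x \<in> ?K" for g x
  proof -
    obtain a where a: "a \<in> vb_words n" "g = vbc n a"
      using \<open>g \<in> carrier G\<close> unfolding carrier_eq by blast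
    obtain w where w: "w \<in> vb_words n" "x = vbc n w" "\<psi> w = id"
      using \<open>x \<in> ?K\<close> by (rule kernel_cases)
    have "\<psi> a \<circ> \<psi> (winv a) = id"
      using winv_in_kernel[of "winv a"] a by simp
    then have "\<psi> (a @ w @ winv a) = id"
      using w by (simp add: \<psi>_append)
    then show ?thesis
      using vbc_in_kernel_iff[of "a @ w @ winv a"] a w by (simp add: vbc_append vbc_winv m_assoc)
  qed
  then show ?thesis
    using kernel_subgroup unfolding normal_inv_iff by blast
qed

end

lemma VP_normal: "VP n \<lhd> G"
  using kernel_normal[of iota1] vb_rel_iota by (simp add: VP_def G_eq_VB)

lemma Hn_normal: "Hn n \<lhd> G"
  using kernel_normal[of iota2] vb_rel_iota by (simp add: Hn_def G_eq_VB)

lemma vbc_in_VP_iff: "w \<in> vb_words n \<Longrightarrow> vbc n w \<in> VP n \<longleftrightarrow> iota1 w = id"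
  using vbc_in_kernel_iff[of iota1] vb_rel_iota by (simp add: VP_def G_eq_VB)

lemma vbc_in_Hn_iff: "w \<in> vb_words n \<Longrightarrow> vbc n w \<in> Hn n \<longleftrightarrow> iota2 w = id"
  using vbc_in_kernel_iff[of iota2] vb_rel_iota by (simp add: Hn_def G_eq_VB)

lemma subgroup_VP: "subgroup (VP n) G"
  using VP_normal by (rule normal_imp_subgroup)

lemma Lambda_in_VP: "a \<in> {1..n} \<Longrightarrow> b \<in> {1..n} \<Longrightarrow> a \<noteq> b \<Longrightarrow> Lambda a b \<in> VP n"
  using vbc_in_VP_iff[OF lam_in_vb_words] iota_lam vbc_lam by simp

lemma iota_winv_lam:
  assumes "a \<in> {1..n}" "b \<in> {1..n}" "a \<noteq> b"
  shows "iota1 (winv (lam a b)) = id \<and> iota2 (winv (lam a b)) = Transposition.transpose a b"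
proof -
  have "iota1 (winv (lam a b)) \<circ> iota1 (lam a b) = id \<and> iota2 (winv (lam a b)) \<circ> iota2 (lam a b) = id"
    using vb_rel_iota[OF winv_append_cancel[OF lam_in_vb_words[OF assms]]] by simp
  then show ?thesis
    using iota_lam[OF assms(3)] by (simp add: fun_eq_iff) (metis transpose_involutory)
qed

lemma lambda_word_props:
  "set u \<subseteq> lambda_indices n \<Longrightarrow>
    concat (map lambda_letter_word u) \<in> vb_words n \<and>
    vbc n (concat (map lambda_letter_word u)) = word_prod G lambda_letter u \<and>
    iota1 (concat (map lambda_letter_word u)) = id \<and>
    iota2 (concat (map lambda_letter_word u)) = tr_prod (concat (map lambda_tr_word u))"
proof (induction u)
  case Nil
  then show ?case by (simp add: vbc_Nil)
next
  case (Cons y u)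
  obtain a b e where y: "y = (a, b, e)" "a \<in> {1..n}" "b \<in> {1..n}" "a \<noteq> b"
    using Cons.prems by (cases y) (auto simp: lambda_indices_def)
  have "lambda_letter_word y \<in> vb_words n \<and> vbc n (lambda_letter_word y) = lambda_letter y \<and>
      iota1 (lambda_letter_word y) = id \<and> iota2 (lambda_letter_word y) = tr_prod (lambda_tr_word y)"
    using lam_in_vb_words[OF y(2-4)] vbc_lam[OF y(2-4)] iota_lam[OF y(4)] iota_winv_lam[OF y(2-4)]
      tr_prod_lambda_tr_word[OF y(1,4)]
    by (simp add: y(1) lambda_letter_word_def lambda_letter_def vbc_winv)
  then show ?case
    using Cons vbc_append by simp
qed

end

section \<open>The normal closure of G in VP_n\<close>

lemma (in group) normal_closure_normal:
  assumes K: "subgroup K G" and X: "X \<subseteq> K"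
  shows "generate G {g \<otimes> x \<otimes> inv g | g x. g \<in> K \<and> x \<in> X} \<lhd> G\<lparr>carrier := K\<rparr>"
proof -
  let ?S = "{g \<otimes> x \<otimes> inv g | g x. g \<in> K \<and> x \<in> X}"
  interpret K: group "G\<lparr>carrier := K\<rparr>"
    by (rule subgroup.subgroup_is_group[OF K is_group])
  have in_K: "g \<in> K \<Longrightarrow> g \<in> carrier G" for g
    using subgroup.subset[OF K] by blast
  have S: "?S \<subseteq> K"
  proof
    fix h
    assume "h \<in> ?S"
    then obtain g x where "h = g \<otimes> x \<otimes> inv g" "g \<in> K" "x \<in> K"
      using X by blast
    then show "h \<in> K"
      using subgroup.m_closed[OF K] subgroup.m_inv_closed[OF K] by simp
  qed
  have "generate (G\<lparr>carrier := K\<rparr>) ?S \<lhd> G\<lparr>carrier := K\<rparr>"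
  proof (rule K.normal_generateI)
    show "?S \<subseteq> carrier (G\<lparr>carrier := K\<rparr>)"
      using S by simp
  next
    fix h g
    assume "h \<in> ?S" and g: "g \<in> carrier (G\<lparr>carrier := K\<rparr>)"
    then obtain g' x where h: "h = g' \<otimes> x \<otimes> inv g'" "g' \<in> K" "x \<in> X"
      by blast
    have "g \<otimes> h \<otimes> inv g = (g \<otimes> g') \<otimes> x \<otimes> inv (g \<otimes> g')"
      using h g X in_K by (simp add: m_assoc inv_mult_group subset_iff)
    moreover have "g \<otimes> g' \<in> K"
      using g h subgroup.m_closed[OF K] by simp
    ultimately have "g \<otimes> h \<otimes> inv g \<in> ?S"
      using h by blast
    then show "g \<otimes>\<^bsub>G\<lparr>carrier := K\<rparr>\<^esub> h \<otimes>\<^bsub>G\<lparr>carrier := K\<rparr>\<^esub> inv\<^bsub>G\<lparr>carrier := K\<rparr>\<^esub> g \<in> ?S"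
      using g m_inv_consistent[OF K] by simp
  qed
  then show ?thesis
    using generate_consistent[OF S K] by simp
qed

lemma (in normal) rcos_eq_one_iff: "x \<in> carrier G \<Longrightarrow> H #> x = \<one>\<^bsub>G Mod H\<^esub> \<longleftrightarrow> x \<in> H"
  using coset_join1 rcos_const is_subgroup by (auto simp: FactGroup_def)

context vb_group
begin

abbreviation NC :: "vword set set" where
  "NC \<equiv> normal_closure_in n (VP n) (Gsub n)"

lemma NC_eq: "NC = generate G {g \<otimes> x \<otimes> inv g | g x. g \<in> VP n \<and> x \<in> Gsub n}"
  by (simp add: normal_closure_in_def G_eq_VB)

lemma G_gens_iota:
  assumes "w \<in> G_gens n"
  shows "w \<in> vb_words n \<and> iota1 w = id \<and> iota2 w = id"
proof -
  have lam: "lam a b \<in> vb_words n \<and> iota1 (lam a b) = id \<and> iota2 (lam a b) = Transposition.transpose a b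
      \<and> iota1 (winv (lam a b)) = id \<and> iota2 (winv (lam a b)) = Transposition.transpose a b"
    if "a \<in> {1..n}" "b \<in> {1..n}" "a \<noteq> b" for a b
    using lam_in_vb_words[OF that] iota_lam[OF that(3)] iota_winv_lam[OF that] by simp
  from assms show ?thesis
    unfolding G_gens_def
  proof (elim UnE CollectE exE conjE)
    fix s t
    assume "w = lam s t @ winv (lam t s)" "1 \<le> s" "s < t" "t \<le> n"
    then show ?thesis
      using lam[of s t] lam[of t s] by (simp add: transpose_commute[of t s])
  next
    fix s t
    assume "w = lam t s @ lam t s" "1 \<le> s" "s < t" "t \<le> n"
    then show ?thesis
      using lam[of t s] by simp
  next
    fix s t q r
    assume "w = lam t s @ lam r q @ winv (lam t s) @ winv (lam r q)" "1 \<le> s" "s < t" "t \<le> n"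
      "1 \<le> q" "q < r" "r \<le> n" "0 < (int t - int r) * (int t - int q) * (int s - int r) * (int s - int q)"
    moreover from this have "t \<noteq> r" "t \<noteq> q" "s \<noteq> r" "s \<noteq> q"
      by auto
    ultimately show ?thesis
      using lam[of t s] lam[of r q] by (auto simp: fun_eq_iff Transposition.transpose_def)
  next
    fix t s r
    assume "w = lam t s @ lam s r @ winv (lam t s) @ winv (lam t r)" "n \<ge> t" "t > s" "s > r" "r \<ge> 1"
    then show ?thesis
      using lam[of t s] lam[of s r] lam[of t r] by (auto simp: fun_eq_iff Transposition.transpose_def)
  next
    fix t s r
    assume "w = lam t s @ lam s r @ winv (lam t r) @ winv (lam s r)" "n \<ge> t" "t > s" "s > r" "r \<ge> 1"
    then show ?thesis
      using lam[of t s] lam[of s r] lam[of t r] by (auto simp: fun_eq_iff Transposition.transpose_def)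
  qed
qed

lemma Gsub_subset: "Gsub n \<subseteq> VP n \<inter> Hn n"
proof -
  have "vbc n ` G_gens n \<subseteq> VP n \<inter> Hn n"
    using G_gens_iota vbc_in_VP_iff vbc_in_Hn_iff by blast
  then show ?thesis
    unfolding Gsub_def G_eq_VB[symmetric]
    by (rule generate_subgroup_incl[OF _ subgroups_Inter_pair[OF subgroup_VP normal_imp_subgroup[OF Hn_normal]]])
qed

lemma NC_subset: "NC \<subseteq> VP n \<inter> Hn n"
proof -
  have "g \<otimes> x \<otimes> inv g \<in> VP n \<inter> Hn n" if "g \<in> VP n" "x \<in> Gsub n" for g x
  proof
    have x: "x \<in> VP n" "x \<in> Hn n"
      using that(2) Gsub_subset by auto
    show "g \<otimes> x \<otimes> inv g \<in> VP n"
      using that(1) x(1) subgroup.m_closed[OF subgroup_VP] subgroup.m_inv_closed[OF subgroup_VP]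
      by simp
    show "g \<otimes> x \<otimes> inv g \<in> Hn n"
      using that(1) x(2) subgroup.subset[OF subgroup_VP] normal.inv_op_closed2[OF Hn_normal]
      by blast
  qed
  then have "{g \<otimes> x \<otimes> inv g | g x. g \<in> VP n \<and> x \<in> Gsub n} \<subseteq> VP n \<inter> Hn n"
    by blast
  then show ?thesis
    unfolding NC_eq
    using subgroups_Inter_pair[OF subgroup_VP normal_imp_subgroup[OF Hn_normal]]
    by (rule generate_subgroup_incl)
qed

lemma NC_normal: "NC \<lhd> G\<lparr>carrier := VP n\<rparr>"
  unfolding NC_eq using Gsub_subset by (intro normal_closure_normal subgroup_VP) auto

lemma vbc_G_gens_in_NC: "w \<in> G_gens n \<Longrightarrow> vbc n w \<in> NC"
proof -
  assume "w \<in> G_gens n"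
  then have "vbc n w \<in> Gsub n"
    unfolding Gsub_def by (rule generate.incl[OF imageI])
  moreover have "vbc n w \<in> carrier G"
    using G_gens_iota \<open>w \<in> G_gens n\<close> by simp
  ultimately have "\<one> \<otimes> vbc n w \<otimes> inv \<one> \<in> {g \<otimes> x \<otimes> inv g | g x. g \<in> VP n \<and> x \<in> Gsub n}"
    using subgroup.one_closed[OF subgroup_VP] by blast
  then show ?thesis
    unfolding NC_eq using \<open>vbc n w \<in> carrier G\<close> by (simp add: generate.incl)
qed

section \<open>The lambdas modulo the normal closure\<close>

definition VP_group :: "vword set monoid" where
  "VP_group = G\<lparr>carrier := VP n\<rparr>"

definition VP_quot :: "vword set set monoid" where
  "VP_quot = VP_group Mod NC"

definition quot :: "vword set \<Rightarrow> vword set set" where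
  "quot x = NC #>\<^bsub>VP_group\<^esub> x"

definition lam_class :: "nat \<Rightarrow> nat \<Rightarrow> vword set set" where
  "lam_class a b = quot (Lambda a b)"

lemma group_hom_quot: "group_hom VP_group VP_quot quot"
proof -
  have "NC \<lhd> VP_group"
    unfolding VP_group_def by (rule NC_normal)
  then show ?thesis
    unfolding VP_quot_def quot_def
    by (intro group_hom.intro group_hom_axioms.intro normal.factorgroup_is_group normal.r_coset_hom_Mod)
      (auto simp: normal_def)
qed

end

sublocale vb_group \<subseteq> Q: group_hom VP_group VP_quot quot
  by (rule group_hom_quot)

context vb_group
begin

lemma carrier_VP_group [simp]: "carrier VP_group = VP n"
  by (simp add: VP_group_def)

lemma quot_eq_one_iff: "x \<in> VP n \<Longrightarrow> quot x = \<one>\<^bsub>VP_quot\<^esub> \<longleftrightarrow> x \<in> NC"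
  using normal.rcos_eq_one_iff[of NC VP_group x] NC_normal
  by (simp add: VP_group_def VP_quot_def quot_def)

lemma lambda_letter_in_VP: "y \<in> lambda_indices n \<Longrightarrow> lambda_letter y \<in> VP n"
  using Lambda_in_VP subgroup.m_inv_closed[OF subgroup_VP]
  by (auto simp: lambda_indices_def lambda_letter_def)

lemma word_prod_VP_group: "word_prod VP_group s l = word_prod G s l"
  by (induction l) (simp_all add: VP_group_def)

lemma quot_lambda_word:
  assumes "set u \<subseteq> lambda_indices n"
  shows "quot (word_prod G lambda_letter u) = word_prod VP_quot (quot \<circ> lambda_letter) u"
proof -
  have "lambda_letter ` set u \<subseteq> carrier VP_group"
    using assms lambda_letter_in_VP by auto
  then show ?thesis
    using Q.word_prod_hom[of lambda_letter u] by (simp add: word_prod_VP_group)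
qed

lemma lam_class_closed: "a \<in> {1..n} \<Longrightarrow> b \<in> {1..n} \<Longrightarrow> a \<noteq> b \<Longrightarrow> lam_class a b \<in> carrier VP_quot"
  unfolding lam_class_def using Lambda_in_VP by simp

lemma lambda_relation:
  assumes "set u \<subseteq> lambda_indices n" and "concat (map lambda_letter_word u) \<in> G_gens n"
  shows "word_prod VP_quot (quot \<circ> lambda_letter) u = \<one>\<^bsub>VP_quot\<^esub>"
proof -
  have "word_prod G lambda_letter u \<in> NC"
    using vbc_G_gens_in_NC[OF assms(2)] lambda_word_props[OF assms(1)] by simp
  then show ?thesis
    using NC_subset quot_eq_one_iff quot_lambda_word[OF assms(1)] by auto
qed

lemma lam_class_sq:
  assumes "1 \<le> b" "b < a" "a \<le> n"
  shows "lam_class a b \<otimes>\<^bsub>VP_quot\<^esub> lam_class a b = \<one>\<^bsub>VP_quot\<^esub>"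
proof -
  have "lam a b @ lam a b \<in> G_gens n"
    unfolding G_gens_def using assms by (intro UnI1 UnI2 CollectI exI[of _ b] exI[of _ a]) simp
  then show ?thesis
    using lambda_relation[of "[(a, b, True), (a, b, True)]"] assms lam_class_closed[of a b]
    by (simp add: lambda_indices_def lambda_letter_word_def lambda_letter_def lam_class_def)
qed

lemma lam_class_sym:
  assumes "1 \<le> a" "a < b" "b \<le> n"
  shows "lam_class a b = lam_class b a"
proof -
  have "lam a b @ winv (lam b a) \<in> G_gens n"
    unfolding G_gens_def using assms by (intro UnI1 CollectI exI[of _ a] exI[of _ b]) simp
  moreover have "quot (inv (Lambda b a)) = inv\<^bsub>VP_quot\<^esub> lam_class b a"
    using Q.hom_inv[of "Lambda b a"] Lambda_in_VP[of b a] assms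
    by (simp add: lam_class_def VP_group_def m_inv_consistent[OF subgroup_VP])
  moreover have closed: "lam_class a b \<in> carrier VP_quot" "lam_class b a \<in> carrier VP_quot"
    using lam_class_closed[of a b] lam_class_closed[of b a] assms by auto
  ultimately have "lam_class a b \<otimes>\<^bsub>VP_quot\<^esub> inv\<^bsub>VP_quot\<^esub> lam_class b a = \<one>\<^bsub>VP_quot\<^esub>"
    using lambda_relation[of "[(a, b, True), (b, a, False)]"] assms
    by (simp add: lambda_indices_def lambda_letter_word_def lambda_letter_def lam_class_def)
  then show ?thesis
    using closed by (metis Q.H.inv_closed Q.H.inv_equality Q.H.inv_inv)
qed

lemma inv_lam_class:
  assumes "a \<in> {1..n}" "b \<in> {1..n}" "a \<noteq> b"
  shows "inv\<^bsub>VP_quot\<^esub> lam_class a b = lam_class a b"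
proof -
  have "lam_class a b \<otimes>\<^bsub>VP_quot\<^esub> lam_class a b = \<one>\<^bsub>VP_quot\<^esub>"
  proof (cases "b < a")
    case True
    then show ?thesis using assms lam_class_sq by simp
  next
    case False
    then show ?thesis using assms lam_class_sq[of a b] lam_class_sym[of a b] by simp
  qed
  then show ?thesis
    using Q.H.inv_equality lam_class_closed[OF assms] by blast
qed

lemma lam_class_relation:
  assumes "set u \<subseteq> lambda_indices n" and "concat (map lambda_letter_word u) \<in> G_gens n"
  shows "word_prod VP_quot (\<lambda>(a, b, e). lam_class a b) u = \<one>\<^bsub>VP_quot\<^esub>"
proof -
  have "(quot \<circ> lambda_letter) y = (\<lambda>(a, b, e). lam_class a b) y" if y: "y \<in> set u" for y
  proof -
    obtain a b e where "y = (a, b, e)" "a \<in> {1..n}" "b \<in> {1..n}" "a \<noteq> b"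
      using y assms(1) by (cases y) (auto simp: lambda_indices_def)
    then show ?thesis
      using Q.hom_inv[of "Lambda a b"] Lambda_in_VP[of a b] inv_lam_class[of a b]
      by (simp add: lambda_letter_def lam_class_def VP_group_def m_inv_consistent[OF subgroup_VP])
  qed
  then have "word_prod VP_quot (quot \<circ> lambda_letter) u = word_prod VP_quot (\<lambda>(a, b, e). lam_class a b) u"
    by (rule word_prod_cong)
  then show ?thesis
    using lambda_relation[OF assms] by simp
qed

lemma lam_class_comm:
  assumes "1 \<le> s" "s < t" "t \<le> n" "1 \<le> q" "q < r" "r \<le> n"
    and "(int t - int r) * (int t - int q) * (int s - int r) * (int s - int q) > 0"
  shows "lam_class t s \<otimes>\<^bsub>VP_quot\<^esub> lam_class r q = lam_class r q \<otimes>\<^bsub>VP_quot\<^esub> lam_class t s"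
proof -
  define x y where "x = lam_class t s" and "y = lam_class r q"
  have closed: "x \<in> carrier VP_quot" "y \<in> carrier VP_quot"
    using assms lam_class_closed by (auto simp: x_def y_def)
  have involution: "inv\<^bsub>VP_quot\<^esub> x = x" "inv\<^bsub>VP_quot\<^esub> y = y"
    using assms inv_lam_class by (auto simp: x_def y_def)
  have "lam t s @ lam r q @ winv (lam t s) @ winv (lam r q) \<in> G_gens n"
    unfolding G_gens_def using assms
    by (intro UnI1 UnI2 CollectI exI[of _ s] exI[of _ t] exI[of _ q] exI[of _ r]) simp
  then have "(x \<otimes>\<^bsub>VP_quot\<^esub> y) \<otimes>\<^bsub>VP_quot\<^esub> (x \<otimes>\<^bsub>VP_quot\<^esub> y) = \<one>\<^bsub>VP_quot\<^esub>"
    using lam_class_relation[of "[(t, s, True), (r, q, True), (t, s, False), (r, q, False)]"] assms closed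
    by (simp add: lambda_indices_def lambda_letter_word_def x_def y_def Q.H.m_assoc)
  then have "inv\<^bsub>VP_quot\<^esub> (x \<otimes>\<^bsub>VP_quot\<^esub> y) = x \<otimes>\<^bsub>VP_quot\<^esub> y"
    using closed by (intro Q.H.inv_equality) auto
  then show ?thesis
    using closed involution by (simp add: Q.H.inv_mult_group x_def y_def)
qed

lemma lam_class_conj_left:
  assumes "1 \<le> r" "r < s" "s < t" "t \<le> n"
  shows "lam_class t r = lam_class t s \<otimes>\<^bsub>VP_quot\<^esub> lam_class s r \<otimes>\<^bsub>VP_quot\<^esub> lam_class t s"
proof -
  have closed: "lam_class t s \<in> carrier VP_quot" "lam_class s r \<in> carrier VP_quot"
    "lam_class t r \<in> carrier VP_quot"
    using assms lam_class_closed by auto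
  have "lam t s @ lam s r @ winv (lam t s) @ winv (lam t r) \<in> G_gens n"
    unfolding G_gens_def using assms
    by (intro UnI1 UnI2 CollectI exI[of _ t] exI[of _ s] exI[of _ r]) simp
  then have "(lam_class t s \<otimes>\<^bsub>VP_quot\<^esub> lam_class s r \<otimes>\<^bsub>VP_quot\<^esub> lam_class t s)
      \<otimes>\<^bsub>VP_quot\<^esub> lam_class t r = \<one>\<^bsub>VP_quot\<^esub>"
    using lam_class_relation[of "[(t, s, True), (s, r, True), (t, s, False), (t, r, False)]"] assms closed
    by (simp add: lambda_indices_def lambda_letter_word_def Q.H.m_assoc)
  then have "inv\<^bsub>VP_quot\<^esub> lam_class t r = lam_class t s \<otimes>\<^bsub>VP_quot\<^esub> lam_class s r \<otimes>\<^bsub>VP_quot\<^esub> lam_class t s"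
    using closed by (intro Q.H.inv_equality) auto
  then show ?thesis
    using assms inv_lam_class[of t r] by simp
qed

lemma lam_class_conj_right:
  assumes "1 \<le> r" "r < s" "s < t" "t \<le> n"
  shows "lam_class t r = lam_class s r \<otimes>\<^bsub>VP_quot\<^esub> lam_class t s \<otimes>\<^bsub>VP_quot\<^esub> lam_class s r"
proof -
  define x y z where "x = lam_class t s" and "y = lam_class s r" and "z = lam_class t r"
  have closed: "x \<in> carrier VP_quot" "y \<in> carrier VP_quot" "z \<in> carrier VP_quot"
    using assms lam_class_closed by (auto simp: x_def y_def z_def)
  have involution: "inv\<^bsub>VP_quot\<^esub> x = x" "inv\<^bsub>VP_quot\<^esub> y = y" "inv\<^bsub>VP_quot\<^esub> z = z"
    using assms inv_lam_class by (auto simp: x_def y_def z_def)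
  have "lam t s @ lam s r @ winv (lam t r) @ winv (lam s r) \<in> G_gens n"
    unfolding G_gens_def using assms
    by (intro UnI2 CollectI exI[of _ t] exI[of _ s] exI[of _ r]) simp
  then have "(x \<otimes>\<^bsub>VP_quot\<^esub> y) \<otimes>\<^bsub>VP_quot\<^esub> (z \<otimes>\<^bsub>VP_quot\<^esub> y) = \<one>\<^bsub>VP_quot\<^esub>"
    using lam_class_relation[of "[(t, s, True), (s, r, True), (t, r, False), (s, r, False)]"] assms closed
    by (simp add: lambda_indices_def lambda_letter_word_def x_def y_def z_def Q.H.m_assoc)
  then have "inv\<^bsub>VP_quot\<^esub> (z \<otimes>\<^bsub>VP_quot\<^esub> y) = x \<otimes>\<^bsub>VP_quot\<^esub> y"
    using closed by (intro Q.H.inv_equality) auto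
  then have "y \<otimes>\<^bsub>VP_quot\<^esub> z = x \<otimes>\<^bsub>VP_quot\<^esub> y"
    using closed involution by (simp add: Q.H.inv_mult_group)
  then have "y \<otimes>\<^bsub>VP_quot\<^esub> (y \<otimes>\<^bsub>VP_quot\<^esub> z) = y \<otimes>\<^bsub>VP_quot\<^esub> x \<otimes>\<^bsub>VP_quot\<^esub> y"
    using closed by (simp add: Q.H.m_assoc)
  moreover have "y \<otimes>\<^bsub>VP_quot\<^esub> y = \<one>\<^bsub>VP_quot\<^esub>"
    using assms lam_class_sq by (simp add: y_def)
  ultimately show ?thesis
    using closed by (simp add: Q.H.m_assoc[symmetric] x_def y_def z_def)
qed

lemma coxeter_A_lam_class: "coxeter_A VP_quot (\<lambda>i. lam_class (Suc i) i) (n - 1)"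
  unfolding coxeter_A_def
proof (intro conjI ballI allI impI)
  fix i
  assume "i \<in> {1..n - 1}"
  then show "lam_class (Suc i) i \<in> carrier VP_quot"
    "lam_class (Suc i) i \<otimes>\<^bsub>VP_quot\<^esub> lam_class (Suc i) i = \<one>\<^bsub>VP_quot\<^esub>"
    using lam_class_closed[of "Suc i" i] lam_class_sq[of i "Suc i"] by auto
next
  fix i j
  assume "i \<in> {1..n - 1}" "j \<in> {1..n - 1}" "i + 2 \<le> j"
  moreover have "(int (Suc i) - int (Suc j)) * (int (Suc i) - int j) * (int i - int (Suc j)) * (int i - int j) > 0"
  proof -
    define k where "k = int j - int i"
    have "k \<ge> 2"
      using \<open>i + 2 \<le> j\<close> by (simp add: k_def)
    then have "k * (k - 1) * (k + 1) * k > 0"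
      by simp
    then show ?thesis
      by (simp add: k_def algebra_simps)
  qed
  ultimately show "lam_class (Suc i) i \<otimes>\<^bsub>VP_quot\<^esub> lam_class (Suc j) j =
      lam_class (Suc j) j \<otimes>\<^bsub>VP_quot\<^esub> lam_class (Suc i) i"
    by (intro lam_class_comm) auto
next
  fix i
  assume "1 \<le> i \<and> i + 1 \<le> n - 1"
  then have "lam_class (i + 2) i = lam_class (i + 2) (i + 1) \<otimes>\<^bsub>VP_quot\<^esub> lam_class (i + 1) i \<otimes>\<^bsub>VP_quot\<^esub> lam_class (i + 2) (i + 1)"
      "lam_class (i + 2) i = lam_class (i + 1) i \<otimes>\<^bsub>VP_quot\<^esub> lam_class (i + 2) (i + 1) \<otimes>\<^bsub>VP_quot\<^esub> lam_class (i + 1) i"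
    using lam_class_conj_left[of i "i + 1" "i + 2"] lam_class_conj_right[of i "i + 1" "i + 2"] by auto
  then show "lam_class (Suc i) i \<otimes>\<^bsub>VP_quot\<^esub> lam_class (Suc (i + 1)) (i + 1) \<otimes>\<^bsub>VP_quot\<^esub> lam_class (Suc i) i =
      lam_class (Suc (i + 1)) (i + 1) \<otimes>\<^bsub>VP_quot\<^esub> lam_class (Suc i) i \<otimes>\<^bsub>VP_quot\<^esub> lam_class (Suc (i + 1)) (i + 1)"
    by (metis Suc_eq_plus1 add_Suc_right one_add_one)
qed

lemma lam_class_transp_word:
  "1 \<le> x \<Longrightarrow> x + d + 1 \<le> n \<Longrightarrow>
    lam_class (x + d + 1) x = word_prod VP_quot (\<lambda>i. lam_class (Suc i) i) (transp_word x d)"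
proof (induction d arbitrary: x)
  case 0
  then show ?case
    using lam_class_closed[of "Suc x" x] by simp
next
  case (Suc d)
  have "{Suc x..Suc x + d} \<subseteq> {1..n - 1}"
    using Suc.prems by auto
  then have word: "set (transp_word (Suc x) d) \<subseteq> {1..n - 1}" "set [x] \<subseteq> {1..n - 1}"
    using set_transp_word[of "Suc x" d] Suc.prems by auto
  have "lam_class (x + Suc d + 1) x =
      lam_class (x + d + 2) (x + 1) \<otimes>\<^bsub>VP_quot\<^esub> lam_class (x + 1) x \<otimes>\<^bsub>VP_quot\<^esub> lam_class (x + d + 2) (x + 1)"
    using Suc.prems lam_class_conj_left[of x "x + 1" "x + d + 2"] by simp
  also have "\<dots> = word_prod VP_quot (\<lambda>i. lam_class (Suc i) i) (transp_word (Suc x) d @ [x] @ transp_word (Suc x) d)"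
    using Suc.IH[of "Suc x"] Suc.prems word lam_class_closed[of "Suc x" x]
      Q.H.coxeter_A_word_prod_append[OF coxeter_A_lam_class word(2) word(1)]
      Q.H.coxeter_A_word_prod_append[OF coxeter_A_lam_class word(1), of "[x] @ transp_word (Suc x) d"]
      Q.H.coxeter_A_word_prod_closed[OF coxeter_A_lam_class word(1)]
    by (simp add: Q.H.m_assoc)
  finally show ?case
    by simp
qed

lemma quot_lambda_letter:
  assumes "y \<in> lambda_indices n"
  shows "quot (lambda_letter y) = word_prod VP_quot (\<lambda>i. lam_class (Suc i) i) (lambda_tr_word y)"
proof -
  obtain a b e where y: "y = (a, b, e)" "a \<in> {1..n}" "b \<in> {1..n}" "a \<noteq> b"
    using assms by (cases y) (auto simp: lambda_indices_def)
  have "quot (lambda_letter y) = lam_class a b"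
    using Q.hom_inv[of "Lambda a b"] Lambda_in_VP[OF y(2-4)] inv_lam_class[OF y(2-4)]
    by (simp add: y(1) lambda_letter_def lam_class_def VP_group_def m_inv_consistent[OF subgroup_VP])
  also have "\<dots> = word_prod VP_quot (\<lambda>i. lam_class (Suc i) i) (lambda_tr_word y)"
  proof (cases "b < a")
    case True
    then show ?thesis
      using lam_class_transp_word[of b "a - b - 1"] y by (simp add: lambda_tr_word_def)
  next
    case False
    then show ?thesis
      using lam_class_transp_word[of a "b - a - 1"] lam_class_sym[of a b] y by (simp add: lambda_tr_word_def)
  qed
  finally show ?thesis .
qed

lemma lambda_word_in_NC:
  assumes u: "set u \<subseteq> lambda_indices n" and perm: "tr_prod (concat (map lambda_tr_word u)) = id"
  shows "word_prod G lambda_letter u \<in> NC"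
proof -
  have tr_words: "set (concat (map lambda_tr_word u)) \<subseteq> {1..n - 1}"
    using u set_lambda_tr_word by fastforce
  have "quot (word_prod G lambda_letter u) =
      word_prod VP_quot (\<lambda>y. word_prod VP_quot (\<lambda>i. lam_class (Suc i) i) (lambda_tr_word y)) u"
    unfolding quot_lambda_word[OF u] using u quot_lambda_letter by (intro word_prod_cong) auto
  also have "\<dots> = word_prod VP_quot (\<lambda>i. lam_class (Suc i) i) (concat (map lambda_tr_word u))"
  proof (rule Q.H.word_prod_concat[symmetric])
    fix y
    assume "y \<in> set u"
    then have "set (lambda_tr_word y) \<subseteq> {1..n - 1}"
      using u set_lambda_tr_word by blast
    then show "(\<lambda>i. lam_class (Suc i) i) ` set (lambda_tr_word y) \<subseteq> carrier VP_quot"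
      using Q.H.coxeter_A_closed[OF coxeter_A_lam_class] by blast
  qed
  also have "\<dots> = \<one>\<^bsub>VP_quot\<^esub>"
    using coxeter_A_word_prod_eq_one[OF Q.H.is_group coxeter_A_lam_class tr_words perm] .
  moreover have "lambda_letter ` set u \<subseteq> carrier VP_group"
    using u lambda_letter_in_VP by auto
  then have "word_prod G lambda_letter u \<in> VP n"
    using Q.G.word_prod_closed[of lambda_letter u] by (simp add: word_prod_VP_group)
  ultimately show ?thesis
    using quot_eq_one_iff by simp
qed

lemma iota_decomposition:
  assumes w: "w \<in> vb_words n" and u: "set u \<subseteq> lambda_indices n" and p: "set p \<subseteq> {1..<n}"
    and decomp: "vbc n w = word_prod G lambda_letter u \<otimes> word_prod G rho p"
  shows "iota1 w = tr_prod p \<and> iota2 w = tr_prod (concat (map lambda_tr_word u)) \<circ> tr_prod p"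
proof -
  define v where "v = concat (map lambda_letter_word u)"
  have v: "v \<in> vb_words n" "vbc n v = word_prod G lambda_letter u" "iota1 v = id"
    "iota2 v = tr_prod (concat (map lambda_tr_word u))"
    using lambda_word_props[OF u] by (simp_all add: v_def)
  have rh: "map rh p \<in> vb_words n" "vbc n (map rh p) = word_prod G rho p"
    using vbc_map_rh[OF p] by simp_all
  have "vbc n w = vbc n (v @ map rh p)"
    using decomp v rh by (simp add: vbc_append)
  then have "(w, v @ map rh p) \<in> vb_rel n"
    using vbc_eq_iff w v(1) rh(1) by simp
  then show ?thesis
    using vb_rel_iota iota_map_rh v by simp
qed

lemma VP_Hn_subset_NC: "VP n \<inter> Hn n \<subseteq> NC"
proof
  fix c
  assume c: "c \<in> VP n \<inter> Hn n"
  then obtain w where w: "w \<in> vb_words n" "c = vbc n w"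
    using subgroup.subset[OF subgroup_VP] carrier_eq by blast
  then have iota: "iota1 w = id" "iota2 w = id"
    using c vbc_in_VP_iff[OF w(1)] vbc_in_Hn_iff[OF w(1)] by simp_all
  obtain u p where u: "set u \<subseteq> lambda_indices n" and p: "set p \<subseteq> {1..<n}"
    and decomp: "vbc n w = word_prod G lambda_letter u \<otimes> word_prod G rho p"
    using vbc_decomposition[OF w(1)] by blast
  then have rho_perm: "tr_prod p = id" and lambda_perm: "tr_prod (concat (map lambda_tr_word u)) = id"
    using iota iota_decomposition[OF w(1) u p decomp] by simp_all
  have "{1..<n} \<subseteq> {1..n - 1}"
    by auto
  then have "word_prod G rho p = \<one>"
    using coxeter_A_word_prod_eq_one[OF is_group coxeter_A_rho _ rho_perm] p by blast
  then have "c = word_prod G lambda_letter u"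
    using w decomp lambda_word_closed[OF u] by simp
  then show "c \<in> NC"
    using lambda_word_in_NC[OF u lambda_perm] by simp
qed

end

theorem theorem7:
  shows "normal_closure_in n (VP n) (Gsub n) = VP n \<inter> Hn n"
proof -
  interpret vb_group "VB n" n
    by (simp add: vb_group_def vb_group_axioms_def group_VB)
  show ?thesis
    using NC_subset VP_Hn_subset_NC by blast
qed

end
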